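(* Let $T$ be a finite group and $G=T\wr\mathfrak{S}_\infty$. Let $V,W$ be finite-dimensional complex Hilbert spaces, let $\pi$ be a unitary representation of $T$ on $W\otimes V$, and let $R\in End(V\otimes V)$ be an involutive $R$-matrix. Then $(\pi,R)$ is a Yang-Baxter couple if and only if $R$ satisfies the Yang-Baxter equation and $(\pi,R)$ satisfies the extended reflection equation $$\forall t,t'\in T,\qquad R_1\pi(t)R_1\pi(t')=\pi(t')R_1\pi(t)R_1 .$$
   Context: $\mathfrak{S}_\infty$ is the group of finitary permutations of $\mathbb{N}=\{1,2,\dots\}$, generated by $\sigma_i=(i\ i{+}1)$, $i\ge1$. $G=T\wr\mathfrak{S}_\infty=\left(\bigcup_n T^n\right)\rtimes\mathfrak{S}_\infty$, where $\bigcup_nT^n$ is the group of sequences $d=(t_i)_{i\ge1}$ in $T$ with $t_i=e_T$ for all but finitely many $i$ (coordinatewise product), and $\mathfrak{S}_\infty$ acts by permuting coordinates. Elements are written $g=(d,\sigma)$. An involutive $R$-matrix is $R\in End(V\otimes V)$ with $R^2=1\otimes1$ and $(R\otimes1)(1\otimes R)(R\otimes1)=(1\otimes R)(R\otimes1)(1\otimes R)$ in $End(V^{\otimes3})$. Consider the algebra $End(W)\otimes End(V)^{\otimes\infty}$ acting on $W\otimes V\otimes V\otimes\cdots$; $R_i$ denotes $R$ acting on the $i$-th and $(i{+}1)$-th copies of $V$ (identity elsewhere, including on $W$), so $R_1=1\otimes R$; $\pi(s)$ denotes $\pi(s)$ acting on $W\otimes$(first copy of $V$), tensored with the identity on the other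 factors. For $g=(d,\sigma)\in G$ put $\rho_{\pi,R}(g):=\rho_{\pi,R}((d,\mathrm{id}))\,\rho_{\pi,R}((1,\sigma))$, where $\rho_{\pi,R}((1,\sigma))$ is the Yang-Baxter representation of $\mathfrak{S}_\infty$ determined by $\sigma_i\mapsto R_i$, and for $d=(t_i)_i$, $$\rho_{\pi,R}((d,\mathrm{id})):=\pi(t_1)\,\big(R_1\pi(t_2)R_1\big)\cdots\big(R_{n-1}\cdots R_1\pi(t_n)R_1\cdots R_{n-1}\big)\cdots.$$ $(\pi,R)$ is called a Yang-Baxter couple if $g\mapsto\rho_{\pi,R}(g)$ defines a group representation of $G$ on $W\otimes V^{\otimes\infty}$. *)

theory Defs
  imports Complex_Main "HOL-Algebra.Group" "HOL-Combinatorics.Permutations"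
begin

(* Matrices on a finite-dimensional complex Hilbert space, written in an
   orthonormal basis indexed by a finite type 'i.                       *)

definition mm :: "('i::finite \<Rightarrow> 'i \<Rightarrow> complex) \<Rightarrow> ('i \<Rightarrow> 'i \<Rightarrow> complex) \<Rightarrow> 'i \<Rightarrow> 'i \<Rightarrow> complex" where
  "mm A B = (\<lambda>x y. \<Sum>z\<in>UNIV. A x z * B z y)"

definition mid :: "'i::finite \<Rightarrow> 'i \<Rightarrow> complex" where
  "mid = (\<lambda>x y. if x = y then 1 else 0)"

definition madj :: "('i::finite \<Rightarrow> 'i \<Rightarrow> complex) \<Rightarrow> 'i \<Rightarrow> 'i \<Rightarrow> complex" where
  "madj A = (\<lambda>x y. cnj (A y x))"

definition unitary_rep :: "('a, 'b) monoid_scheme \<Rightarrow> ('a \<Rightarrow> ('i::finite \<Rightarrow> 'i \<Rightarrow> complex)) \<Rightarrow> bool" where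
  "unitary_rep T \<pi> \<longleftrightarrow>
     \<pi> \<one>\<^bsub>T\<^esub> = mid \<and>
     (\<forall>s\<in>carrier T. \<forall>t\<in>carrier T. \<pi> (s \<otimes>\<^bsub>T\<^esub> t) = mm (\<pi> s) (\<pi> t)) \<and>
     (\<forall>t\<in>carrier T. mm (madj (\<pi> t)) (\<pi> t) = mid)"

definition R12 :: "('v \<times> 'v \<Rightarrow> 'v \<times> 'v \<Rightarrow> complex) \<Rightarrow> 'v \<times> 'v \<times> 'v \<Rightarrow> 'v \<times> 'v \<times> 'v \<Rightarrow> complex" where
  "R12 R = (\<lambda>(a,b,c) (a',b',c'). if c = c' then R (a,b) (a',b') else 0)"

definition R23 :: "('v \<times> 'v \<Rightarrow> 'v \<times> 'v \<Rightarrow> complex) \<Rightarrow> 'v \<times> 'v \<times> 'v \<Rightarrow> 'v \<times> 'v \<times> 'v \<Rightarrow> complex" where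
  "R23 R = (\<lambda>(a,b,c) (a',b',c'). if a = a' then R (b,c) (b',c') else 0)"

definition YBE :: "('v::finite \<times> 'v \<Rightarrow> 'v \<times> 'v \<Rightarrow> complex) \<Rightarrow> bool" where
  "YBE R \<longleftrightarrow> mm (R12 R) (mm (R23 R) (R12 R)) = mm (R23 R) (mm (R12 R) (R23 R))"

definition involutive_Rmatrix :: "('v::finite \<times> 'v \<Rightarrow> 'v \<times> 'v \<Rightarrow> complex) \<Rightarrow> bool" where
  "involutive_Rmatrix R \<longleftrightarrow> mm R R = mid \<and> YBE R"

(* Operators on W \<otimes> V^{\<otimes> n}: basis vectors indexed by (a, xs) with
   a :: 'w and xs a list of length n; the k-th copy of V (k = 1..n) is
   list position k-1.  Operators are matrices, zero outside the basis.   *)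

type_synonym ('w, 'v) st = "'w \<times> 'v list"
type_synonym ('w, 'v) lop = "('w, 'v) st \<Rightarrow> ('w, 'v) st \<Rightarrow> complex"

definition states :: "nat \<Rightarrow> ('w::finite, 'v::finite) st set" where
  "states n = UNIV \<times> {xs. length xs = n}"

definition opmul :: "nat \<Rightarrow> ('w::finite, 'v::finite) lop \<Rightarrow> ('w, 'v) lop \<Rightarrow> ('w, 'v) lop" where
  "opmul n A B = (\<lambda>x y. \<Sum>z\<in>states n. A x z * B z y)"

definition opid :: "nat \<Rightarrow> ('w::finite, 'v::finite) lop" where
  "opid n = (\<lambda>x y. if x \<in> states n \<and> x = y then 1 else 0)"

definition opprod :: "nat \<Rightarrow> ('w::finite, 'v::finite) lop list \<Rightarrow> ('w, 'v) lop" where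
  "opprod n As = foldr (opmul n) As (opid n)"

(* R_i : R acting on the i-th and (i+1)-th copies of V, 1 \<le> i \<le> n-1 *)
definition Rop :: "('v \<times> 'v \<Rightarrow> 'v \<times> 'v \<Rightarrow> complex) \<Rightarrow> nat \<Rightarrow> nat \<Rightarrow> ('w::finite, 'v::finite) lop" where
  "Rop R n i = (\<lambda>(a,xs) (b,ys).
     if (a,xs) \<in> states n \<and> (b,ys) \<in> states n \<and> a = b \<and>
        (\<forall>j<n. j \<noteq> i - 1 \<and> j \<noteq> i \<longrightarrow> xs ! j = ys ! j)
     then R (xs ! (i - 1), xs ! i) (ys ! (i - 1), ys ! i) else 0)"

(* an operator on W \<otimes> V acting on W \<otimes> (first copy of V), n \<ge> 1 *)
definition Piop :: "nat \<Rightarrow> ('w \<times> 'v \<Rightarrow> 'w \<times> 'v \<Rightarrow> complex) \<Rightarrow> ('w::finite, 'v::finite) lop" where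
  "Piop n A = (\<lambda>(a,xs) (b,ys).
     if (a,xs) \<in> states n \<and> (b,ys) \<in> states n \<and> tl xs = tl ys
     then A (a, hd xs) (b, hd ys) else 0)"

definition piPos :: "('v \<times> 'v \<Rightarrow> 'v \<times> 'v \<Rightarrow> complex) \<Rightarrow> nat \<Rightarrow> ('w \<times> 'v \<Rightarrow> 'w \<times> 'v \<Rightarrow> complex) \<Rightarrow> nat \<Rightarrow> ('w::finite, 'v::finite) lop" where
  "piPos R n A i = opprod n (map (Rop R n) (rev [1..<i]) @ [Piop n A] @ map (Rop R n) [1..<i])"

definition rhoD :: "('v \<times> 'v \<Rightarrow> 'v \<times> 'v \<Rightarrow> complex) \<Rightarrow> ('a \<Rightarrow> ('w \<times> 'v \<Rightarrow> 'w \<times> 'v \<Rightarrow> complex)) \<Rightarrow> nat \<Rightarrow> (nat \<Rightarrow> 'a) \<Rightarrow> ('w::finite, 'v::finite) lop" where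
  "rhoD R \<pi> n d = opprod n (map (\<lambda>i. piPos R n (\<pi> (d i)) i) [1..<Suc n])"

definition sword :: "nat list \<Rightarrow> nat \<Rightarrow> nat" where
  "sword w = foldr (\<lambda>i f. transpose i (Suc i) \<circ> f) w id"

definition rhoS :: "('v \<times> 'v \<Rightarrow> 'v \<times> 'v \<Rightarrow> complex) \<Rightarrow> nat \<Rightarrow> (nat \<Rightarrow> nat) \<Rightarrow> ('w::finite, 'v::finite) lop" where
  "rhoS R n \<sigma> = opprod n (map (Rop R n)
      (SOME w. set w \<subseteq> {1..<n} \<and> sword w = \<sigma>))"

definition rho :: "('v \<times> 'v \<Rightarrow> 'v \<times> 'v \<Rightarrow> complex) \<Rightarrow> ('a \<Rightarrow> ('w \<times> 'v \<Rightarrow> 'w \<times> 'v \<Rightarrow> complex)) \<Rightarrow> nat \<Rightarrow> (nat \<Rightarrow> 'a) \<times> (nat \<Rightarrow> nat) \<Rightarrow> ('w::finite, 'v::finite) lop" where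
  "rho R \<pi> n g = opmul n (rhoD R \<pi> n (fst g)) (rhoS R n (snd g))"

definition wr_carrier :: "('a, 'b) monoid_scheme \<Rightarrow> nat \<Rightarrow> ((nat \<Rightarrow> 'a) \<times> (nat \<Rightarrow> nat)) set" where
  "wr_carrier T n = {(d, \<sigma>). (\<forall>i. d i \<in> carrier T) \<and> (\<forall>i. i \<notin> {1..n} \<longrightarrow> d i = \<one>\<^bsub>T\<^esub>)
                          \<and> \<sigma> permutes {1..n}}"

definition wr_mult :: "('a, 'b) monoid_scheme \<Rightarrow> (nat \<Rightarrow> 'a) \<times> (nat \<Rightarrow> nat) \<Rightarrow> (nat \<Rightarrow> 'a) \<times> (nat \<Rightarrow> nat) \<Rightarrow> (nat \<Rightarrow> 'a) \<times> (nat \<Rightarrow> nat)" where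
  "wr_mult T g h = ((\<lambda>i. fst g i \<otimes>\<^bsub>T\<^esub> fst h (Hilbert_Choice.inv (snd g) i)), snd g \<circ> snd h)"

(* Since every pair of elements of G lies in some G_n and rho(g) for g \<in> G_n
   lives in End(W \<otimes> V^{\<otimes> n}) \<otimes> 1, this is checked level by level. *)
definition YB_couple :: "('a, 'b) monoid_scheme \<Rightarrow> ('a \<Rightarrow> ('w::finite \<times> 'v::finite \<Rightarrow> 'w \<times> 'v \<Rightarrow> complex)) \<Rightarrow> ('v \<times> 'v \<Rightarrow> 'v \<times> 'v \<Rightarrow> complex) \<Rightarrow> bool" where
  "YB_couple T \<pi> R \<longleftrightarrow>
     (\<forall>n\<ge>1. \<forall>g\<in>wr_carrier T n. \<forall>h\<in>wr_carrier T n.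
        (rho R \<pi> n (wr_mult T g h) :: ('w,'v) lop) = opmul n (rho R \<pi> n g) (rho R \<pi> n h))"

definition ext_reflection :: "('a, 'b) monoid_scheme \<Rightarrow> ('a \<Rightarrow> ('w::finite \<times> 'v::finite \<Rightarrow> 'w \<times> 'v \<Rightarrow> complex)) \<Rightarrow> ('v \<times> 'v \<Rightarrow> 'v \<times> 'v \<Rightarrow> complex) \<Rightarrow> bool" where
  "ext_reflection T \<pi> R \<longleftrightarrow>
     (\<forall>t\<in>carrier T. \<forall>t'\<in>carrier T.
        (opprod 2 [Rop R 2 1, Piop 2 (\<pi> t), Rop R 2 1, Piop 2 (\<pi> t')] :: ('w,'v) lop)
        = opprod 2 [Piop 2 (\<pi> t'), Rop R 2 1, Piop 2 (\<pi> t), Rop R 2 1])"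

end

(* rho(d, sigma) is a word in the operators R_i and pi(t).  Its diagonal part is the product of the
   pi_j(t_j) = R_(j-1) ... R_1 pi(t_j) R_1 ... R_(j-1), its permutation part a product of R_i along a
   word for sigma.  Since R^2 = 1 and R satisfies the braid relation, the R_i obey the Coxeter
   relations of S_n, so every word for sigma can be replaced by a canonical one.  Conjugation by R_i
   sends pi_j(t) to pi_(s_i j)(t), and the extended reflection equation says exactly that pi_1(t) and
   pi_2(t') commute; conjugating, pi_i(t) and pi_j(t') commute whenever i <> j.  These are the
   defining relations of T wr S_n, so the normal-form words of g and h multiply to that of gh, which
   is the multiplicativity of rho.  Conversely, multiplicativity applied to t at position 2 times t'
   at position 1 in G_2 is the extended reflection equation. *)

theory Submission
  imports Defs
begin

section \<open>Operators on a truncated tensor power\<close>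

text \<open>\<open>opid n\<close> is a unit only for operators vanishing off \<open>states n\<close>.\<close>

definition op_supported :: "nat \<Rightarrow> ('w::finite, 'v::finite) lop \<Rightarrow> bool" where
  "op_supported n A \<longleftrightarrow> (\<forall>x y. A x y \<noteq> 0 \<longrightarrow> x \<in> states n \<and> y \<in> states n)"

lemma op_supportedD:
  assumes "op_supported n A"
  shows "x \<notin> states n \<Longrightarrow> A x y = 0" and "y \<notin> states n \<Longrightarrow> A x y = 0"
  using assms unfolding op_supported_def by blast+

lemma op_supportedI:
  "(\<And>x y. x \<notin> states n \<or> y \<notin> states n \<Longrightarrow> A x y = 0) \<Longrightarrow> op_supported n A"
  unfolding op_supported_def by blast

lemma mem_states: "x \<in> states n \<longleftrightarrow> length (snd x) = n"
  by (cases x) (simp add: states_def)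

lemma finite_states [simp]: "finite (states n :: ('w::finite, 'v::finite) st set)"
proof -
  have "finite {xs :: 'v list. set xs \<subseteq> UNIV \<and> length xs = n}"
    by (rule finite_lists_length_eq) simp
  then show ?thesis
    unfolding states_def by simp
qed

lemma mm_mid_right [simp]: "mm A mid = A"
  by (intro ext) (simp add: mm_def mid_def if_distrib[where f="\<lambda>c. _ * c"] cong: if_cong)

lemma opmul_assoc: "opmul n (opmul n A B) C = opmul n A (opmul n B C)"
  unfolding opmul_def
  by (intro ext) (simp add: sum_distrib_left sum_distrib_right mult.assoc, rule sum.swap)

lemma opmul_opid_left:
  assumes "op_supported n A"
  shows "opmul n (opid n) A = A"
proof (intro ext)
  fix x y
  have "opmul n (opid n) A x y = (\<Sum>z\<in>states n. if z = x then A x y else 0)"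
    unfolding opmul_def opid_def by (rule sum.cong) auto
  then show "opmul n (opid n) A x y = A x y"
    using assms by (simp add: op_supportedD)
qed

lemma opmul_opid_right:
  assumes "op_supported n A"
  shows "opmul n A (opid n) = A"
proof (intro ext)
  fix x y
  have "opmul n A (opid n) x y = (\<Sum>z\<in>states n. if z = y then A x y else 0)"
    unfolding opmul_def opid_def by (rule sum.cong) auto
  then show "opmul n A (opid n) x y = A x y"
    using assms by (simp add: op_supportedD)
qed

lemma op_supported_opid [simp]: "op_supported n (opid n)"
  by (rule op_supportedI) (auto simp: opid_def)

lemma op_supported_opmul [simp]:
  "op_supported n A \<Longrightarrow> op_supported n B \<Longrightarrow> op_supported n (opmul n A B)"
  by (rule op_supportedI) (auto simp: opmul_def op_supportedD)

lemma op_supported_Rop [simp]: "op_supported n (Rop R n i)"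
  by (rule op_supportedI) (auto simp: Rop_def)

lemma op_supported_Piop [simp]: "op_supported n (Piop n A)"
  by (rule op_supportedI) (auto simp: Piop_def)

lemma opprod_Nil [simp]: "opprod n [] = opid n"
  by (simp add: opprod_def)

lemma opprod_Cons [simp]: "opprod n (A # As) = opmul n A (opprod n As)"
  by (simp add: opprod_def)

lemma op_supported_opprod [simp]:
  "\<forall>A\<in>set As. op_supported n A \<Longrightarrow> op_supported n (opprod n As)"
  by (induct As) simp_all

lemma opprod_append:
  "\<forall>B\<in>set Bs. op_supported n B \<Longrightarrow> opprod n (As @ Bs) = opmul n (opprod n As) (opprod n Bs)"
  by (induct As) (simp_all add: opmul_opid_left opmul_assoc)


section \<open>Operators acting on one tensor factor\<close>

text \<open>A lens \<open>(get, put)\<close> on the basis \<open>states n\<close> exhibits \<open>W \<otimes> V\<^sup>\<otimes>\<^sup>n\<close> as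
  \<open>K \<otimes> K'\<close> with \<open>K\<close> spanned by \<open>'k\<close>; \<open>factor_op n get put M\<close> is \<open>M \<otimes> 1\<^sub>K\<^sub>'\<close>.\<close>

locale tensor_factor =
  fixes n :: nat
    and get :: "('w::finite, 'v::finite) st \<Rightarrow> 'k::finite"
    and put :: "'k \<Rightarrow> ('w, 'v) st \<Rightarrow> ('w, 'v) st"
  assumes put_states: "x \<in> states n \<Longrightarrow> put k x \<in> states n"
    and get_put: "x \<in> states n \<Longrightarrow> get (put k x) = k"
    and put_put: "x \<in> states n \<Longrightarrow> put k (put k' x) = put k x"
    and put_get: "x \<in> states n \<Longrightarrow> put (get x) x = x"

definition factor_op ::
    "nat \<Rightarrow> (('w::finite, 'v::finite) st \<Rightarrow> 'k::finite) \<Rightarrow> ('k \<Rightarrow> ('w, 'v) st \<Rightarrow> ('w, 'v) st) \<Rightarrow>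
     ('k \<Rightarrow> 'k \<Rightarrow> complex) \<Rightarrow> ('w, 'v) lop" where
  "factor_op n get put M =
     (\<lambda>x y. if x \<in> states n \<and> y \<in> states n \<and> put (get y) x = y then M (get x) (get y) else 0)"

lemma op_supported_factor_op [simp]: "op_supported n (factor_op n get put M)"
  by (rule op_supportedI) (auto simp: factor_op_def)

context tensor_factor
begin

lemma sum_states_fibre:
  assumes x: "x \<in> states n"
    and F: "\<And>z. z \<in> states n \<Longrightarrow> F z \<noteq> 0 \<Longrightarrow> put (get z) x = z"
  shows "(\<Sum>z\<in>states n. F z) = (\<Sum>k\<in>UNIV. F (put k x))"
proof -
  have "(\<Sum>z\<in>states n. F z) = (\<Sum>z\<in>range (\<lambda>k. put k x). F z)"
  proof (rule sum.mono_neutral_right)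
    show "range (\<lambda>k. put k x) \<subseteq> states n"
      using put_states[OF x] by blast
    show "\<forall>z\<in>states n - range (\<lambda>k. put k x). F z = 0"
      using F by (metis DiffD1 DiffD2 rangeI)
  qed simp
  also have "\<dots> = (\<Sum>k\<in>UNIV. F (put k x))"
    by (rule sum.reindex[unfolded comp_def]) (metis injI get_put x)
  finally show ?thesis .
qed

lemma factor_op_apply: "x \<in> states n \<Longrightarrow> factor_op n get put M (put k x) (put k' x) = M k k'"
  by (simp add: factor_op_def put_states get_put put_put)

lemma opmul_factor_op:
  "opmul n (factor_op n get put M) (factor_op n get put M') = factor_op n get put (mm M M')"
proof (intro ext)
  fix x y
  show "opmul n (factor_op n get put M) (factor_op n get put M') x y = factor_op n get put (mm M M') x y"
  proof (cases "x \<in> states n")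
    case False
    then show ?thesis by (simp add: opmul_def factor_op_def)
  next
    case x: True
    have "opmul n (factor_op n get put M) (factor_op n get put M') x y
        = (\<Sum>k\<in>UNIV. factor_op n get put M x (put k x) * factor_op n get put M' (put k x) y)"
      unfolding opmul_def
      by (rule sum_states_fibre[OF x]) (simp add: factor_op_def split: if_split_asm)
    also have "\<dots> = (\<Sum>k\<in>UNIV. if y \<in> states n \<and> put (get y) x = y then M (get x) k * M' k (get y) else 0)"
      by (rule sum.cong) (auto simp: factor_op_def x put_states get_put put_put)
    also have "\<dots> = factor_op n get put (mm M M') x y"
      by (cases "y \<in> states n"; cases "put (get y) x = y") (simp_all add: factor_op_def mm_def x)
    finally show ?thesis .
  qed
qed

lemma factor_op_mid: "factor_op n get put mid = opid n"
proof (intro ext)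
  fix x y
  have "x \<in> states n \<Longrightarrow> put (get y) x = y \<Longrightarrow> get x = get y \<Longrightarrow> x = y"
    by (metis put_get)
  then show "factor_op n get put mid x y = opid n x y"
    by (auto simp: factor_op_def opid_def mid_def put_get)
qed

lemma opprod_factor_op: "opprod n (map (factor_op n get put) Ms) = factor_op n get put (foldr mm Ms mid)"
  by (induct Ms) (simp_all add: factor_op_mid opmul_factor_op)

lemma factor_op_inject: "factor_op n get put M = factor_op n get put M' \<Longrightarrow> M = M'"
proof (intro ext)
  fix k k'
  assume eq: "factor_op n get put M = factor_op n get put M'"
  have x: "(undefined, replicate n undefined) \<in> states n"
    by (simp add: states_def)
  show "M k k' = M' k k'"
    using factor_op_apply[OF x, of M k k'] factor_op_apply[OF x, of M' k k'] eq by simp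
qed
end

locale disjoint_factors = f1: tensor_factor n get1 put1 + f2: tensor_factor n get2 put2
  for n and get1 :: "('w::finite, 'v::finite) st \<Rightarrow> 'k::finite" and put1
    and get2 :: "('w, 'v) st \<Rightarrow> 'l::finite" and put2 +
  assumes put_commute: "x \<in> states n \<Longrightarrow> put1 k (put2 l x) = put2 l (put1 k x)"
    and get1_put2: "x \<in> states n \<Longrightarrow> get1 (put2 l x) = get1 x"
    and get2_put1: "x \<in> states n \<Longrightarrow> get2 (put1 k x) = get2 x"
begin

lemma opmul_factor_ops:
  "opmul n (factor_op n get1 put1 M) (factor_op n get2 put2 N) = (\<lambda>x y.
     if x \<in> states n \<and> y \<in> states n \<and> put1 (get1 y) (put2 (get2 y) x) = y
     then M (get1 x) (get1 y) * N (get2 x) (get2 y) else 0)"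
  (is "_ = ?rhs")
proof (intro ext)
  fix x y
  show "opmul n (factor_op n get1 put1 M) (factor_op n get2 put2 N) x y = ?rhs x y"
  proof (cases "x \<in> states n")
    case False
    then show ?thesis by (simp add: opmul_def factor_op_def)
  next
    case x: True
    have "opmul n (factor_op n get1 put1 M) (factor_op n get2 put2 N) x y
        = (\<Sum>k\<in>UNIV. factor_op n get1 put1 M x (put1 k x) * factor_op n get2 put2 N (put1 k x) y)"
      unfolding opmul_def
      by (rule f1.sum_states_fibre[OF x]) (simp add: factor_op_def split: if_split_asm)
    also have "\<dots> = (\<Sum>k\<in>UNIV. if k = get1 y then ?rhs x y else 0)"
    proof (rule sum.cong)
      fix k
      show "factor_op n get1 put1 M x (put1 k x) * factor_op n get2 put2 N (put1 k x) y
          = (if k = get1 y then ?rhs x y else 0)"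
      proof (cases "k = get1 y")
        case True
        have "put2 (get2 y) (put1 k x) = put1 (get1 y) (put2 (get2 y) x)"
          using put_commute[OF x] True by simp
        then show ?thesis
          using True by (simp add: factor_op_def x f1.put_states f1.get_put f1.put_put get2_put1)
      next
        case False
        then have "put2 (get2 y) (put1 k x) \<noteq> y"
          by (metis get1_put2 f1.get_put f1.put_states x)
        then show ?thesis
          using False by (simp add: factor_op_def)
      qed
    qed simp
    also have "\<dots> = ?rhs x y"
      by simp
    finally show ?thesis .
  qed
qed
end

lemma disjoint_factors_swap:
  "disjoint_factors n get1 put1 get2 put2 \<Longrightarrow> disjoint_factors n get2 put2 get1 put1"
  unfolding disjoint_factors_def disjoint_factors_axioms_def by auto

lemma factor_ops_commute:
  assumes "disjoint_factors n get1 put1 get2 put2"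
  shows "opmul n (factor_op n get1 put1 M) (factor_op n get2 put2 N)
       = opmul n (factor_op n get2 put2 N) (factor_op n get1 put1 M)"
proof -
  interpret a: disjoint_factors n get1 put1 get2 put2 by fact
  interpret b: disjoint_factors n get2 put2 get1 put1 by (rule disjoint_factors_swap) fact
  show ?thesis
    unfolding a.opmul_factor_ops b.opmul_factor_ops
    by (intro ext) (auto simp: a.put_commute mult.commute)
qed


text \<open>Copy \<open>i\<close> of \<open>V\<close> sits at list position \<open>i - 1\<close>; hence \<open>R\<^sub>p\<^sub>+\<^sub>1\<close> lives on positions
  \<open>p, p + 1\<close>.\<close>

definition get_pair :: "nat \<Rightarrow> ('w, 'v) st \<Rightarrow> 'v \<times> 'v" where
  "get_pair p x = (snd x ! p, snd x ! Suc p)"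

definition put_pair :: "nat \<Rightarrow> 'v \<times> 'v \<Rightarrow> ('w, 'v) st \<Rightarrow> ('w, 'v) st" where
  "put_pair p k x = (fst x, (snd x)[p := fst k, Suc p := snd k])"

definition get_triple :: "nat \<Rightarrow> ('w, 'v) st \<Rightarrow> 'v \<times> 'v \<times> 'v" where
  "get_triple p x = (snd x ! p, snd x ! Suc p, snd x ! Suc (Suc p))"

definition put_triple :: "nat \<Rightarrow> 'v \<times> 'v \<times> 'v \<Rightarrow> ('w, 'v) st \<Rightarrow> ('w, 'v) st" where
  "put_triple p k x =
     (fst x, (snd x)[p := fst k, Suc p := fst (snd k), Suc (Suc p) := snd (snd k)])"

definition get_head :: "('w, 'v) st \<Rightarrow> 'w \<times> 'v" where
  "get_head x = (fst x, snd x ! 0)"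

definition put_head :: "'w \<times> 'v \<Rightarrow> ('w, 'v) st \<Rightarrow> ('w, 'v) st" where
  "put_head k x = (fst k, (snd x)[0 := snd k])"

definition get_head2 :: "('w, 'v) st \<Rightarrow> 'w \<times> 'v \<times> 'v" where
  "get_head2 x = (fst x, snd x ! 0, snd x ! 1)"

definition put_head2 :: "'w \<times> 'v \<times> 'v \<Rightarrow> ('w, 'v) st \<Rightarrow> ('w, 'v) st" where
  "put_head2 k x = (fst k, (snd x)[0 := fst (snd k), 1 := snd (snd k)])"

lemma tensor_factor_pair:
  "Suc p < n \<Longrightarrow> tensor_factor n (get_pair p :: ('w::finite, 'v::finite) st \<Rightarrow> _) (put_pair p)"
  by unfold_locales (auto simp: get_pair_def put_pair_def mem_states list_eq_iff_nth_eq nth_list_update)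

lemma tensor_factor_triple:
  "Suc (Suc p) < n \<Longrightarrow> tensor_factor n (get_triple p :: ('w::finite, 'v::finite) st \<Rightarrow> _) (put_triple p)"
  by unfold_locales
    (auto simp: get_triple_def put_triple_def mem_states list_eq_iff_nth_eq nth_list_update)

lemma tensor_factor_head:
  "1 \<le> n \<Longrightarrow> tensor_factor n (get_head :: ('w::finite, 'v::finite) st \<Rightarrow> _) put_head"
  by unfold_locales (auto simp: get_head_def put_head_def mem_states list_eq_iff_nth_eq nth_list_update)

lemma tensor_factor_head2:
  "2 \<le> n \<Longrightarrow> tensor_factor n (get_head2 :: ('w::finite, 'v::finite) st \<Rightarrow> _) put_head2"
  by unfold_locales
    (auto simp: get_head2_def put_head2_def mem_states list_eq_iff_nth_eq nth_list_update)

lemma disjoint_factors_pairs: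
  "Suc p < q \<Longrightarrow> Suc q < n \<Longrightarrow>
   disjoint_factors n (get_pair p :: ('w::finite, 'v::finite) st \<Rightarrow> _) (put_pair p) (get_pair q) (put_pair q)"
  unfolding disjoint_factors_def disjoint_factors_axioms_def
  using tensor_factor_pair[of p n] tensor_factor_pair[of q n]
  by (auto simp: get_pair_def put_pair_def mem_states list_eq_iff_nth_eq nth_list_update)

lemma disjoint_factors_head_pair:
  "1 \<le> q \<Longrightarrow> Suc q < n \<Longrightarrow>
   disjoint_factors n (get_head :: ('w::finite, 'v::finite) st \<Rightarrow> _) put_head (get_pair q) (put_pair q)"
  unfolding disjoint_factors_def disjoint_factors_axioms_def
  using tensor_factor_head[of n] tensor_factor_pair[of q n]
  by (auto simp: get_head_def put_head_def get_pair_def put_pair_def mem_states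
      list_eq_iff_nth_eq nth_list_update)

lemma Rop_eq_factor_pair:
  assumes p: "Suc p < n"
  shows "(Rop R n (Suc p) :: ('w::finite, 'v::finite) lop) = factor_op n (get_pair p) (put_pair p) R"
proof (intro ext)
  fix x y :: "('w, 'v) st"
  obtain a xs b ys where x: "x = (a, xs)" and y: "y = (b, ys)"
    by (cases x, cases y) auto
  have "length xs = n \<Longrightarrow> length ys = n \<Longrightarrow>
      xs[p := ys ! p, Suc p := ys ! Suc p] = ys \<longleftrightarrow> (\<forall>j<n. j \<noteq> p \<and> j \<noteq> Suc p \<longrightarrow> xs ! j = ys ! j)"
    using p by (auto simp: list_eq_iff_nth_eq nth_list_update)
  then show "Rop R n (Suc p) x y = factor_op n (get_pair p) (put_pair p) R x y"
    unfolding x y Rop_def factor_op_def get_pair_def put_pair_def by (auto simp: states_def)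
qed

lemma Rop_eq_factor_triple_12:
  assumes p: "Suc (Suc p) < n"
  shows "(Rop R n (Suc p) :: ('w::finite, 'v::finite) lop) = factor_op n (get_triple p) (put_triple p) (R12 R)"
proof (intro ext)
  fix x y :: "('w, 'v) st"
  obtain a xs b ys where x: "x = (a, xs)" and y: "y = (b, ys)"
    by (cases x, cases y) auto
  have "length xs = n \<Longrightarrow> length ys = n \<Longrightarrow>
      (xs[p := ys ! p, Suc p := ys ! Suc p, Suc (Suc p) := ys ! Suc (Suc p)] = ys
        \<and> xs ! Suc (Suc p) = ys ! Suc (Suc p))
      \<longleftrightarrow> (\<forall>j<n. j \<noteq> p \<and> j \<noteq> Suc p \<longrightarrow> xs ! j = ys ! j)"
    using p by (auto simp: list_eq_iff_nth_eq nth_list_update)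
  then show "Rop R n (Suc p) x y = factor_op n (get_triple p) (put_triple p) (R12 R) x y"
    unfolding x y Rop_def factor_op_def get_triple_def put_triple_def R12_def by (auto simp: states_def)
qed

lemma Rop_eq_factor_triple_23:
  assumes p: "Suc (Suc p) < n"
  shows "(Rop R n (Suc (Suc p)) :: ('w::finite, 'v::finite) lop)
       = factor_op n (get_triple p) (put_triple p) (R23 R)"
proof (intro ext)
  fix x y :: "('w, 'v) st"
  obtain a xs b ys where x: "x = (a, xs)" and y: "y = (b, ys)"
    by (cases x, cases y) auto
  have "length xs = n \<Longrightarrow> length ys = n \<Longrightarrow>
      (xs[p := ys ! p, Suc p := ys ! Suc p, Suc (Suc p) := ys ! Suc (Suc p)] = ys \<and> xs ! p = ys ! p)
      \<longleftrightarrow> (\<forall>j<n. j \<noteq> Suc p \<and> j \<noteq> Suc (Suc p) \<longrightarrow> xs ! j = ys ! j)"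
    using p by (auto simp: list_eq_iff_nth_eq nth_list_update)
  then show "Rop R n (Suc (Suc p)) x y = factor_op n (get_triple p) (put_triple p) (R23 R) x y"
    unfolding x y Rop_def factor_op_def get_triple_def put_triple_def R23_def by (auto simp: states_def)
qed

lemma Piop_eq_factor_head:
  assumes n: "1 \<le> n"
  shows "(Piop n A :: ('w::finite, 'v::finite) lop) = factor_op n get_head put_head A"
proof (intro ext)
  fix x y :: "('w, 'v) st"
  obtain a xs b ys where x: "x = (a, xs)" and y: "y = (b, ys)"
    by (cases x, cases y) auto
  show "Piop n A x y = factor_op n get_head put_head A x y"
  proof (cases "length xs = n \<and> length ys = n")
    case True
    then obtain u us v vs where "xs = u # us" "ys = v # vs"
      using n by (cases xs; cases ys) auto
    then show ?thesis
      unfolding x y Piop_def factor_op_def get_head_def put_head_def by (auto simp: states_def)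
  next
    case False
    then show ?thesis
      unfolding x y Piop_def factor_op_def by (auto simp: states_def)
  qed
qed

definition id_tensor :: "('v \<times> 'v \<Rightarrow> 'v \<times> 'v \<Rightarrow> complex) \<Rightarrow> 'w \<times> 'v \<times> 'v \<Rightarrow> 'w \<times> 'v \<times> 'v \<Rightarrow> complex" where
  "id_tensor R k k' = (if fst k = fst k' then R (snd k) (snd k') else 0)"

definition tensor_id :: "('w \<times> 'v \<Rightarrow> 'w \<times> 'v \<Rightarrow> complex) \<Rightarrow> 'w \<times> 'v \<times> 'v \<Rightarrow> 'w \<times> 'v \<times> 'v \<Rightarrow> complex" where
  "tensor_id A k k' =
     (if snd (snd k) = snd (snd k') then A (fst k, fst (snd k)) (fst k', fst (snd k')) else 0)"

lemma Rop_eq_factor_head2: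
  assumes n: "2 \<le> n"
  shows "(Rop R n 1 :: ('w::finite, 'v::finite) lop) = factor_op n get_head2 put_head2 (id_tensor R)"
proof (intro ext)
  fix x y :: "('w, 'v) st"
  obtain a xs b ys where x: "x = (a, xs)" and y: "y = (b, ys)"
    by (cases x, cases y) auto
  have "length xs = n \<Longrightarrow> length ys = n \<Longrightarrow>
      xs[0 := ys ! 0, 1 := ys ! 1] = ys \<longleftrightarrow> (\<forall>j<n. j \<noteq> 0 \<and> j \<noteq> 1 \<longrightarrow> xs ! j = ys ! j)"
    using n by (auto simp: list_eq_iff_nth_eq nth_list_update)
  then show "Rop R n 1 x y = factor_op n get_head2 put_head2 (id_tensor R) x y"
    unfolding x y Rop_def factor_op_def get_head2_def put_head2_def id_tensor_def
    by (auto simp: states_def)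
qed

lemma Piop_eq_factor_head2:
  assumes n: "2 \<le> n"
  shows "(Piop n A :: ('w::finite, 'v::finite) lop) = factor_op n get_head2 put_head2 (tensor_id A)"
proof (intro ext)
  fix x y :: "('w, 'v) st"
  obtain a xs b ys where x: "x = (a, xs)" and y: "y = (b, ys)"
    by (cases x, cases y) auto
  show "Piop n A x y = factor_op n get_head2 put_head2 (tensor_id A) x y"
  proof (cases "length xs = n \<and> length ys = n")
    case True
    then obtain u u' us v v' vs where "xs = u # u' # us" "ys = v # v' # vs"
      using n by (cases xs; cases ys; cases "tl xs"; cases "tl ys") auto
    then show ?thesis
      unfolding x y Piop_def factor_op_def get_head2_def put_head2_def tensor_id_def
      by (auto simp: states_def)
  next
    case False
    then show ?thesis
      unfolding x y Piop_def factor_op_def by (auto simp: states_def)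
  qed
qed


lemma opprod_Rop_square:
  assumes "mm R R = mid" "1 \<le> i" "i < n"
  shows "opprod n [Rop R n i, Rop R n i] = (opid n :: ('w::finite, 'v::finite) lop)"
proof -
  obtain p where i: "i = Suc p"
    using assms by (cases i) auto
  interpret tensor_factor n "get_pair p :: ('w, 'v) st \<Rightarrow> _" "put_pair p"
    using assms i by (intro tensor_factor_pair) auto
  have l: "[Rop R n i, Rop R n i] = (map (factor_op n (get_pair p) (put_pair p)) [R, R] :: ('w, 'v) lop list)"
    using assms i by (simp add: Rop_eq_factor_pair)
  show ?thesis
    unfolding l opprod_factor_op using assms(1) by (simp add: factor_op_mid)
qed

lemma opprod_Rop_braid:
  assumes "YBE R" "1 \<le> i" "Suc i < n"
  shows "opprod n [Rop R n i, Rop R n (Suc i), Rop R n i]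
       = (opprod n [Rop R n (Suc i), Rop R n i, Rop R n (Suc i)] :: ('w::finite, 'v::finite) lop)"
proof -
  obtain p where i: "i = Suc p"
    using assms by (cases i) auto
  interpret tensor_factor n "get_triple p :: ('w, 'v) st \<Rightarrow> _" "put_triple p"
    using assms i by (intro tensor_factor_triple) auto
  let ?F = "factor_op n (get_triple p) (put_triple p) :: _ \<Rightarrow> ('w, 'v) lop"
  have "[Rop R n i, Rop R n (Suc i), Rop R n i] = map ?F [R12 R, R23 R, R12 R]"
    and "[Rop R n (Suc i), Rop R n i, Rop R n (Suc i)] = map ?F [R23 R, R12 R, R23 R]"
    using assms i by (simp_all add: Rop_eq_factor_triple_12 Rop_eq_factor_triple_23)
  then show ?thesis
    using assms(1) by (simp only: opprod_factor_op) (simp add: YBE_def)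
qed

lemma opprod_Rop_far_commute:
  assumes "1 \<le> i" "i + 2 \<le> j" "j < n"
  shows "opprod n [Rop R n i, Rop R n j] = (opprod n [Rop R n j, Rop R n i] :: ('w::finite, 'v::finite) lop)"
proof -
  obtain p q where i: "i = Suc p" and j: "j = Suc q"
    using assms by (cases i; cases j) auto
  have "disjoint_factors n (get_pair p :: ('w, 'v) st \<Rightarrow> _) (put_pair p) (get_pair q) (put_pair q)"
    using assms i j by (intro disjoint_factors_pairs) auto
  then show ?thesis
    using assms i j by (simp add: Rop_eq_factor_pair opmul_opid_right factor_ops_commute)
qed

lemma opprod_Piop_Rop_commute:
  assumes "2 \<le> j" "j < n"
  shows "opprod n [Piop n A, Rop R n j] = (opprod n [Rop R n j, Piop n A] :: ('w::finite, 'v::finite) lop)"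
proof -
  obtain q where j: "j = Suc q"
    using assms by (cases j) auto
  have "disjoint_factors n (get_head :: ('w, 'v) st \<Rightarrow> _) put_head (get_pair q) (put_pair q)"
    using assms j by (intro disjoint_factors_head_pair) auto
  then show ?thesis
    using assms j by (simp add: Rop_eq_factor_pair Piop_eq_factor_head opmul_opid_right factor_ops_commute)
qed

lemma opprod_Piop_mult:
  assumes "1 \<le> n"
  shows "opprod n [Piop n A, Piop n B] = (opprod n [Piop n (mm A B)] :: ('w::finite, 'v::finite) lop)"
proof -
  interpret tensor_factor n "get_head :: ('w, 'v) st \<Rightarrow> _" put_head
    using assms by (rule tensor_factor_head)
  show ?thesis
    using assms by (simp add: Piop_eq_factor_head opmul_opid_right opmul_factor_op)
qed

lemma Piop_mid: "1 \<le> n \<Longrightarrow> (Piop n mid :: ('w::finite, 'v::finite) lop) = opid n"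
  by (simp add: Piop_eq_factor_head tensor_factor.factor_op_mid[OF tensor_factor_head])

lemma opprod_ext_reflection_lift:
  assumes n: "2 \<le> n"
    and ext: "(opprod 2 [Rop R 2 1, Piop 2 A, Rop R 2 1, Piop 2 B] :: ('w::finite, 'v::finite) lop)
            = opprod 2 [Piop 2 B, Rop R 2 1, Piop 2 A, Rop R 2 1]"
  shows "(opprod n [Rop R n 1, Piop n A, Rop R n 1, Piop n B] :: ('w, 'v) lop)
       = opprod n [Piop n B, Rop R n 1, Piop n A, Rop R n 1]"
proof -
  let ?F = "\<lambda>m. factor_op m (get_head2 :: ('w, 'v) st \<Rightarrow> _) put_head2"
  have lhs: "[Rop R m 1, Piop m A, Rop R m 1, Piop m B]
      = map (?F m) [id_tensor R, tensor_id A, id_tensor R, tensor_id B]"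
    and rhs: "[Piop m B, Rop R m 1, Piop m A, Rop R m 1]
      = map (?F m) [tensor_id B, id_tensor R, tensor_id A, id_tensor R]" if "2 \<le> m" for m
    by (simp_all only: Rop_eq_factor_head2[OF that] Piop_eq_factor_head2[OF that] list.map)
  interpret f2: tensor_factor 2 "get_head2 :: ('w, 'v) st \<Rightarrow> _" put_head2
    by (rule tensor_factor_head2) simp
  interpret fn: tensor_factor n "get_head2 :: ('w, 'v) st \<Rightarrow> _" put_head2
    using n by (rule tensor_factor_head2)
  have "foldr mm [id_tensor R, tensor_id A, id_tensor R, tensor_id B] mid
      = foldr mm [tensor_id B, id_tensor R, tensor_id A, id_tensor R] mid"
    using ext by (intro f2.factor_op_inject) (simp only: lhs rhs order_refl f2.opprod_factor_op)
  then show ?thesis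
    using n by (simp only: lhs rhs fn.opprod_factor_op)
qed


section \<open>Words for permutations and the Coxeter relations\<close>

lemma sword_Nil [simp]: "sword [] = id"
  by (simp add: sword_def)

lemma sword_Cons [simp]: "sword (i # w) = transpose i (Suc i) \<circ> sword w"
  by (simp add: sword_def)

lemma sword_append: "sword (u @ v) = sword u \<circ> sword v"
  by (induct u) (simp_all add: comp_assoc)

lemma sword_rev_comp: "sword (rev w) \<circ> sword w = id"
  by (induct w) (simp_all add: sword_append fun_eq_iff)

lemma sword_comp_rev: "sword w \<circ> sword (rev w) = id"
  using sword_rev_comp[of "rev w"] by simp

lemma inv_sword: "Hilbert_Choice.inv (sword w) = sword (rev w)"
  by (rule inv_unique_comp) (simp_all add: sword_comp_rev sword_rev_comp)

lemma sword_permutes: "set w \<subseteq> {1..<n} \<Longrightarrow> sword w permutes {1..n}"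
proof (induct w)
  case (Cons i w)
  then have "transpose i (Suc i) permutes {1..n}"
    by (intro permutes_swap_id) auto
  moreover have "sword w permutes {1..n}"
    using Cons by simp
  ultimately show ?case
    unfolding sword_Cons by (rule permutes_compose[rotated])
qed simp

lemma sword_upt_last: "k \<le> m \<Longrightarrow> sword [k..<m] m = k"
proof (induction "m - k" arbitrary: k)
  case (Suc d)
  then have "[k..<m] = k # [Suc k..<m]"
    by (simp add: upt_conv_Cons)
  moreover have "sword [Suc k..<m] m = Suc k"
    using Suc by simp
  ultimately show ?case
    by simp
qed simp

inductive coxeter_equiv :: "nat \<Rightarrow> nat list \<Rightarrow> nat list \<Rightarrow> bool" for n where
  cox_refl: "coxeter_equiv n w w"
| cox_sym: "coxeter_equiv n u v \<Longrightarrow> coxeter_equiv n v u"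
| cox_trans: "coxeter_equiv n u v \<Longrightarrow> coxeter_equiv n v w \<Longrightarrow> coxeter_equiv n u w"
| cox_context: "coxeter_equiv n u v \<Longrightarrow> coxeter_equiv n (a @ u @ c) (a @ v @ c)"
| cox_square: "1 \<le> i \<Longrightarrow> i < n \<Longrightarrow> coxeter_equiv n [i, i] []"
| cox_braid: "1 \<le> i \<Longrightarrow> Suc i < n \<Longrightarrow> coxeter_equiv n [i, Suc i, i] [Suc i, i, Suc i]"
| cox_far: "1 \<le> i \<Longrightarrow> i + 2 \<le> j \<Longrightarrow> j < n \<Longrightarrow> coxeter_equiv n [i, j] [j, i]"

declare cox_trans [trans]

lemma coxeter_equiv_sword: "coxeter_equiv n u v \<Longrightarrow> sword u = sword v"
  by (induct rule: coxeter_equiv.induct) (simp_all add: sword_append fun_eq_iff transpose_def)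

lemma coxeter_equiv_rev: "coxeter_equiv n u v \<Longrightarrow> coxeter_equiv n (rev u) (rev v)"
proof (induct rule: coxeter_equiv.induct)
  case (cox_context u v a c)
  then show ?case
    using coxeter_equiv.cox_context[of n "rev u" "rev v" "rev c" "rev a"] by simp
next
  case (cox_braid i)
  then show ?case
    using coxeter_equiv.cox_braid[of i n] by simp
next
  case (cox_far i j)
  then show ?case
    using coxeter_equiv.cox_far[of i j n] by (simp add: cox_sym)
qed (auto intro: coxeter_equiv.intros)

lemma coxeter_equiv_mono: "coxeter_equiv m u v \<Longrightarrow> m \<le> n \<Longrightarrow> coxeter_equiv n u v"
  by (induct rule: coxeter_equiv.induct) (auto intro: coxeter_equiv.intros)

lemma coxeter_equiv_append:
  "coxeter_equiv n u u' \<Longrightarrow> coxeter_equiv n v v' \<Longrightarrow> coxeter_equiv n (u @ v) (u' @ v')"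
  using cox_context[of n u u' "[]" v] cox_context[of n v v' u' "[]"] by (auto intro: cox_trans)

lemma coxeter_equiv_push:
  "1 \<le> i \<Longrightarrow> i < n \<Longrightarrow> \<forall>j\<in>set w. 1 \<le> j \<and> j < n \<and> (i + 2 \<le> j \<or> j + 2 \<le> i) \<Longrightarrow>
   coxeter_equiv n (i # w) (w @ [i])"
proof (induct w)
  case (Cons j w)
  have "coxeter_equiv n [i, j] [j, i]"
    using Cons.prems cox_far[of i j n] cox_far[of j i n] by (auto intro: cox_sym)
  then have "coxeter_equiv n ([i, j] @ w) ([j, i] @ w)"
    using coxeter_equiv_append cox_refl by blast
  moreover have "coxeter_equiv n ([j] @ i # w) ([j] @ w @ [i])"
    using Cons by (intro coxeter_equiv_append cox_refl) simp
  ultimately show ?case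
    by (auto intro: cox_trans)
qed (simp add: cox_refl)

lemma coxeter_equiv_shift_down:
  assumes "1 \<le> k" "k \<le> j" "Suc j < n"
  shows "coxeter_equiv n (Suc j # [k..<n]) ([k..<n] @ [j])"
proof -
  define A where "A = [k..<j]"
  define B where "B = [Suc (Suc j)..<n]"
  have split: "[k..<n] = A @ [j, Suc j] @ B"
    using assms upt_add_eq_append[of k j "n - j"] by (simp add: A_def B_def upt_conv_Cons)
  have "coxeter_equiv n (Suc j # A) (A @ [Suc j])"
    using assms by (intro coxeter_equiv_push) (auto simp: A_def)
  then have "coxeter_equiv n (Suc j # [k..<n]) (A @ [Suc j, j, Suc j] @ B)"
    unfolding split using coxeter_equiv_append[OF _ cox_refl[of n "[j, Suc j] @ B"]] by fastforce
  also have "coxeter_equiv n (A @ [Suc j, j, Suc j] @ B) (A @ [j, Suc j] @ j # B)"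
    using assms cox_context[OF cox_sym[OF cox_braid[of j n]], of A B] by simp
  also have "coxeter_equiv n (j # B) (B @ [j])"
    using assms by (intro coxeter_equiv_push) (auto simp: B_def)
  then have "coxeter_equiv n (A @ [j, Suc j] @ j # B) ([k..<n] @ [j])"
    unfolding split using coxeter_equiv_append[OF cox_refl[of n "A @ [j, Suc j]"]] by simp
  finally show ?thesis .
qed

text \<open>With \<open>k = \<sigma>(m + 1)\<close>, the word \<open>s\<^sub>k \<cdots> s\<^sub>m\<close> sends \<open>m + 1\<close> to \<open>k\<close>; what remains of
  \<open>\<sigma>\<close> permutes \<open>{1..m}\<close>.\<close>

fun canonical_word :: "nat \<Rightarrow> (nat \<Rightarrow> nat) \<Rightarrow> nat list" where
  "canonical_word 0 \<sigma> = []"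
| "canonical_word (Suc m) \<sigma> =
     [\<sigma> (Suc m)..<Suc m] @ canonical_word m (sword (rev [\<sigma> (Suc m)..<Suc m]) \<circ> \<sigma>)"

lemma canonical_word_id: "canonical_word n id = []"
  by (induct n) simp_all

lemma canonical_word_step:
  assumes "\<sigma> permutes {1..Suc m}"
  defines "k \<equiv> \<sigma> (Suc m)"
  shows "1 \<le> k" and "k \<le> Suc m" and "sword (rev [k..<Suc m]) \<circ> \<sigma> permutes {1..m}"
proof -
  have "k \<in> {1..Suc m}"
    unfolding k_def using permutes_in_image[OF assms(1), of "Suc m"] by simp
  then show k: "1 \<le> k" "k \<le> Suc m"
    by auto
  have "sword (rev [k..<Suc m]) permutes {1..Suc m}"
    using k by (intro sword_permutes) auto
  then have "sword (rev [k..<Suc m]) \<circ> \<sigma> permutes insert (Suc m) {1..m}"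
    using assms(1) permutes_compose by (fastforce simp: atLeastAtMostSuc_conv)
  moreover have "sword (rev [k..<Suc m]) (sword [k..<Suc m] (Suc m)) = Suc m"
    using fun_cong[OF sword_rev_comp] by simp
  then have "(sword (rev [k..<Suc m]) \<circ> \<sigma>) (Suc m) = Suc m"
    using sword_upt_last[OF k(2)] by (simp add: k_def)
  ultimately show "sword (rev [k..<Suc m]) \<circ> \<sigma> permutes {1..m}"
    using permutes_insert_lemma by fastforce
qed

lemma canonical_word_represents:
  "\<sigma> permutes {1..n} \<Longrightarrow> set (canonical_word n \<sigma>) \<subseteq> {1..<n} \<and> sword (canonical_word n \<sigma>) = \<sigma>"
proof (induct n arbitrary: \<sigma>)
  case 0
  then show ?case by (simp add: permutes_empty)
next
  case (Suc m)
  define k where "k = \<sigma> (Suc m)"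
  note step = canonical_word_step[OF Suc.prems, folded k_def]
  define \<tau> where "\<tau> = sword (rev [k..<Suc m]) \<circ> \<sigma>"
  have can: "canonical_word (Suc m) \<sigma> = [k..<Suc m] @ canonical_word m \<tau>"
    by (simp only: canonical_word.simps k_def \<tau>_def)
  have IH: "set (canonical_word m \<tau>) \<subseteq> {1..<m}" "sword (canonical_word m \<tau>) = \<tau>"
    using Suc.hyps[OF step(3)[folded \<tau>_def]] by auto
  have "sword [k..<Suc m] \<circ> \<tau> = \<sigma>"
    unfolding \<tau>_def by (simp add: comp_assoc[symmetric] sword_comp_rev)
  then show ?case
    unfolding can using IH step(1) by (auto simp: sword_append simp del: upt_Suc)
qed

lemma canonical_word_transpose_Cons:
  assumes "\<sigma> (Suc m) = Suc i" "1 \<le> i" "i \<le> m"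
  shows "canonical_word (Suc m) (transpose i (Suc i) \<circ> \<sigma>) = i # canonical_word (Suc m) \<sigma>"
proof -
  have ci: "[i..<Suc m] = i # [Suc i..<Suc m]"
    using assms by (simp add: upt_conv_Cons)
  have "sword (rev [i..<Suc m]) \<circ> transpose i (Suc i) \<circ> \<sigma> = sword (rev [Suc i..<Suc m]) \<circ> \<sigma>"
    unfolding ci by (simp add: sword_append fun_eq_iff)
  with assms ci show ?thesis
    by (simp add: comp_assoc del: upt_Suc)
qed

text \<open>If \<open>s\<^sub>i\<close> fixes \<open>k = \<sigma>(m + 1)\<close>, it passes through \<open>s\<^sub>k \<cdots> s\<^sub>m\<close> as some \<open>s\<^sub>i\<^sub>'\<close>, and the
  induction hypothesis applies to \<open>s\<^sub>i\<^sub>' \<circ> \<tau>\<close>.\<close>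

lemma coxeter_equiv_canonical_word_shift:
  fixes \<sigma> :: "nat \<Rightarrow> nat" and m i i' :: nat
  defines "k \<equiv> \<sigma> (Suc m)"
  assumes \<sigma>: "\<sigma> permutes {1..Suc m}"
    and IH: "\<And>\<tau>. \<tau> permutes {1..m} \<Longrightarrow>
      coxeter_equiv m (i' # canonical_word m \<tau>) (canonical_word m (transpose i' (Suc i') \<circ> \<tau>))"
    and fixes_k: "transpose i (Suc i) k = k"
    and word: "coxeter_equiv (Suc m) (i # [k..<Suc m]) ([k..<Suc m] @ [i'])"
  shows "coxeter_equiv (Suc m) (i # canonical_word (Suc m) \<sigma>)
           (canonical_word (Suc m) (transpose i (Suc i) \<circ> \<sigma>))"
proof -
  define c where "c = [k..<Suc m]"
  define \<tau> where "\<tau> = sword (rev c) \<circ> \<sigma>"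
  have \<tau>: "\<tau> permutes {1..m}"
    using canonical_word_step(3)[OF \<sigma>] by (simp add: \<tau>_def c_def k_def)
  have "sword (rev c @ [i]) = sword (i' # rev c)"
    using coxeter_equiv_sword[OF coxeter_equiv_rev[OF word]] by (simp add: c_def)
  then have "sword (rev c) \<circ> transpose i (Suc i) \<circ> \<sigma> = transpose i' (Suc i') \<circ> \<tau>"
    unfolding \<tau>_def by (simp add: sword_append comp_assoc)
  then have can: "canonical_word (Suc m) (transpose i (Suc i) \<circ> \<sigma>)
      = c @ canonical_word m (transpose i' (Suc i') \<circ> \<tau>)"
    using fixes_k by (simp add: k_def c_def comp_assoc del: upt_Suc)
  have "coxeter_equiv (Suc m) (i # c @ canonical_word m \<tau>) (c @ i' # canonical_word m \<tau>)"
    using coxeter_equiv_append[OF word cox_refl] by (simp add: c_def)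
  also have "coxeter_equiv (Suc m) \<dots> (c @ canonical_word m (transpose i' (Suc i') \<circ> \<tau>))"
    using IH[OF \<tau>] by (intro coxeter_equiv_append cox_refl) (auto elim: coxeter_equiv_mono)
  finally show ?thesis
    unfolding can by (simp add: k_def c_def \<tau>_def del: upt_Suc)
qed

lemma coxeter_equiv_canonical_word_step:
  "\<sigma> permutes {1..n} \<Longrightarrow> 1 \<le> i \<Longrightarrow> i < n \<Longrightarrow>
   coxeter_equiv n (i # canonical_word n \<sigma>) (canonical_word n (transpose i (Suc i) \<circ> \<sigma>))"
proof (induct n arbitrary: \<sigma> i)
  case (Suc m)
  let ?t = "transpose i (Suc i)"
  define k where "k = \<sigma> (Suc m)"
  note k = canonical_word_step(1,2)[OF Suc.prems(1), folded k_def]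
  consider "k = Suc i" | "k = i" | "Suc i < k" | "k < i"
    by linarith
  then show ?case
  proof cases
    case 1
    then have "canonical_word (Suc m) (?t \<circ> \<sigma>) = i # canonical_word (Suc m) \<sigma>"
      using Suc.prems by (intro canonical_word_transpose_Cons) (simp_all add: k_def)
    then show ?thesis
      by (simp only: cox_refl)
  next
    case 2
    then have "canonical_word (Suc m) (?t \<circ> (?t \<circ> \<sigma>)) = i # canonical_word (Suc m) (?t \<circ> \<sigma>)"
      using Suc.prems by (intro canonical_word_transpose_Cons) (simp_all add: k_def)
    then have "canonical_word (Suc m) \<sigma> = i # canonical_word (Suc m) (?t \<circ> \<sigma>)"
      by (simp add: comp_assoc[symmetric] del: canonical_word.simps)
    then show ?thesis
      using cox_context[OF cox_square[OF Suc.prems(2,3)], of "[]" "canonical_word (Suc m) (?t \<circ> \<sigma>)"]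
      by (simp only: append.simps)
  next
    case 3
    have "i < m"
      using 3 k by simp
    have word: "coxeter_equiv (Suc m) (i # [k..<Suc m]) ([k..<Suc m] @ [i])"
      using Suc.prems 3 by (intro coxeter_equiv_push) auto
    show ?thesis
      by (rule coxeter_equiv_canonical_word_shift[OF Suc.prems(1) Suc.hyps[OF _ Suc.prems(2) \<open>i < m\<close>]
            _ word[unfolded k_def]])
        (use 3 in \<open>auto simp: k_def transpose_def\<close>)
  next
    case 4
    then obtain j where ij: "i = Suc j"
      by (cases i) auto
    have j: "1 \<le> j" "j < m"
      using 4 ij Suc.prems k by auto
    have word: "coxeter_equiv (Suc m) (i # [k..<Suc m]) ([k..<Suc m] @ [j])"
      unfolding ij using 4 ij Suc.prems k by (intro coxeter_equiv_shift_down) auto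
    show ?thesis
      by (rule coxeter_equiv_canonical_word_shift[OF Suc.prems(1) Suc.hyps[OF _ j] _ word[unfolded k_def]])
        (use 4 in \<open>auto simp: k_def transpose_def\<close>)
  qed
qed simp

lemma coxeter_equiv_canonical_word:
  "set w \<subseteq> {1..<n} \<Longrightarrow> coxeter_equiv n w (canonical_word n (sword w))"
proof (induct w)
  case Nil
  show ?case
    using canonical_word_id[of n] by (simp add: id_def cox_refl)
next
  case (Cons i w)
  have "coxeter_equiv n (i # w) (i # canonical_word n (sword w))"
    using Cons coxeter_equiv_append[OF cox_refl[of n "[i]"]] by simp
  moreover have "coxeter_equiv n (i # canonical_word n (sword w)) (canonical_word n (sword (i # w)))"
    using coxeter_equiv_canonical_word_step[OF sword_permutes[of w n], of i] Cons.prems by simp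
  ultimately show ?case
    by (rule cox_trans)
qed

lemma opprod_Rop_coxeter_equiv:
  assumes "involutive_Rmatrix R" "coxeter_equiv n u v"
  shows "(opprod n (map (Rop R n) u) :: ('w::finite, 'v::finite) lop) = opprod n (map (Rop R n) v)"
  using assms(2)
proof (induct rule: coxeter_equiv.induct)
  case (cox_context u v a c)
  then show ?case
    by (simp add: opprod_append ball_Un)
next
  case (cox_square i)
  then show ?case
    using opprod_Rop_square[of R i n] assms(1) by (simp add: involutive_Rmatrix_def)
next
  case (cox_braid i)
  then show ?case
    using opprod_Rop_braid[of R i n] assms(1) by (simp add: involutive_Rmatrix_def)
next
  case (cox_far i j)
  then show ?case
    using opprod_Rop_far_commute[of i j n R] by simp
qed simp_all

lemma rhoS_eq_canonical_word:
  assumes "involutive_Rmatrix R" "\<sigma> permutes {1..n}"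
  shows "(rhoS R n \<sigma> :: ('w::finite, 'v::finite) lop) = opprod n (map (Rop R n) (canonical_word n \<sigma>))"
proof -
  let ?P = "\<lambda>w. set w \<subseteq> {1..<n} \<and> sword w = \<sigma>"
  have "?P (SOME w. ?P w)"
    using canonical_word_represents[OF assms(2)] by (rule someI)
  then have "coxeter_equiv n (SOME w. ?P w) (canonical_word n \<sigma>)"
    using coxeter_equiv_canonical_word by fastforce
  then show ?thesis
    unfolding rhoS_def using opprod_Rop_coxeter_equiv[OF assms(1)] by blast
qed


section \<open>Words in the generators of \<open>T \<wr> \<SS>\<^sub>n\<close>\<close>

text \<open>\<open>Rgen i\<close> stands for \<open>R\<^sub>i\<close> (or the transposition \<open>\<sigma>\<^sub>i\<close>), \<open>Pgen t\<close> for \<open>\<pi>(t)\<close> acting on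
  \<open>W \<otimes>\<close> the first copy of \<open>V\<close> (or \<open>t\<close> placed at position 1).\<close>

datatype 'a gen = Rgen nat | Pgen 'a

fun gen_op :: "('v \<times> 'v \<Rightarrow> 'v \<times> 'v \<Rightarrow> complex) \<Rightarrow> ('a \<Rightarrow> ('w \<times> 'v \<Rightarrow> 'w \<times> 'v \<Rightarrow> complex)) \<Rightarrow> nat \<Rightarrow>
    'a gen \<Rightarrow> ('w::finite, 'v::finite) lop" where
  "gen_op R \<pi> n (Rgen i) = Rop R n i"
| "gen_op R \<pi> n (Pgen t) = Piop n (\<pi> t)"

definition word_op :: "('v \<times> 'v \<Rightarrow> 'v \<times> 'v \<Rightarrow> complex) \<Rightarrow> ('a \<Rightarrow> ('w \<times> 'v \<Rightarrow> 'w \<times> 'v \<Rightarrow> complex)) \<Rightarrow> nat \<Rightarrow>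
    'a gen list \<Rightarrow> ('w::finite, 'v::finite) lop" where
  "word_op R \<pi> n w = opprod n (map (gen_op R \<pi> n) w)"

lemma op_supported_gen_op [simp]: "op_supported n (gen_op R \<pi> n g)"
  by (cases g) simp_all

lemma word_op_append: "word_op R \<pi> n (u @ v) = opmul n (word_op R \<pi> n u) (word_op R \<pi> n v)"
  by (simp add: word_op_def opprod_append)

lemma word_op_Rgens: "word_op R \<pi> n (map Rgen w) = opprod n (map (Rop R n) w)"
  by (simp add: word_op_def comp_def)

lemma word_op_concat: "opprod n (map (\<lambda>i. word_op R \<pi> n (f i)) l) = word_op R \<pi> n (concat (map f l))"
  by (induct l) (simp_all add: word_op_append, simp add: word_op_def)

text \<open>Relations among the operators \<open>R\<^sub>i\<close> and \<open>\<pi>(t)\<close>; only \<open>wr_reflection\<close> depends on the extended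
  reflection equation.\<close>

inductive wreath_equiv :: "('a, 'b) monoid_scheme \<Rightarrow> nat \<Rightarrow> 'a gen list \<Rightarrow> 'a gen list \<Rightarrow> bool"
  for T n where
  wr_refl: "wreath_equiv T n w w"
| wr_sym: "wreath_equiv T n u v \<Longrightarrow> wreath_equiv T n v u"
| wr_trans: "wreath_equiv T n u v \<Longrightarrow> wreath_equiv T n v w \<Longrightarrow> wreath_equiv T n u w"
| wr_context: "wreath_equiv T n u v \<Longrightarrow> wreath_equiv T n (a @ u @ c) (a @ v @ c)"
| wr_coxeter: "coxeter_equiv n u v \<Longrightarrow> wreath_equiv T n (map Rgen u) (map Rgen v)"
| wr_far_pi: "2 \<le> j \<Longrightarrow> j < n \<Longrightarrow> wreath_equiv T n [Pgen t, Rgen j] [Rgen j, Pgen t]"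
| wr_pi_mult: "t \<in> carrier T \<Longrightarrow> t' \<in> carrier T \<Longrightarrow>
    wreath_equiv T n [Pgen t, Pgen t'] [Pgen (t \<otimes>\<^bsub>T\<^esub> t')]"
| wr_pi_one: "wreath_equiv T n [Pgen \<one>\<^bsub>T\<^esub>] []"
| wr_reflection: "2 \<le> n \<Longrightarrow> t \<in> carrier T \<Longrightarrow> t' \<in> carrier T \<Longrightarrow>
    wreath_equiv T n [Rgen 1, Pgen t, Rgen 1, Pgen t'] [Pgen t', Rgen 1, Pgen t, Rgen 1]"

declare wr_trans [trans]

lemma wreath_equiv_append:
  "wreath_equiv T n u u' \<Longrightarrow> wreath_equiv T n v v' \<Longrightarrow> wreath_equiv T n (u @ v) (u' @ v')"
  using wr_context[of T n u u' "[]" v] wr_context[of T n v v' u' "[]"] by (auto intro: wr_trans)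

lemma wreath_equiv_square: "1 \<le> i \<Longrightarrow> i < n \<Longrightarrow> wreath_equiv T n [Rgen i, Rgen i] []"
  using wr_coxeter[OF cox_square, of i n T] by simp

lemma wreath_equiv_braid:
  "1 \<le> i \<Longrightarrow> Suc i < n \<Longrightarrow> wreath_equiv T n [Rgen i, Rgen (Suc i), Rgen i] [Rgen (Suc i), Rgen i, Rgen (Suc i)]"
  using wr_coxeter[OF cox_braid, of i n T] by simp

lemma wreath_equiv_far: "1 \<le> i \<Longrightarrow> i + 2 \<le> j \<Longrightarrow> j < n \<Longrightarrow> wreath_equiv T n [Rgen i, Rgen j] [Rgen j, Rgen i]"
  using wr_coxeter[OF cox_far, of i j n T] by simp

definition far_letter :: "nat \<Rightarrow> nat \<Rightarrow> 'a gen \<Rightarrow> bool" where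
  "far_letter n i g = (case g of Rgen k \<Rightarrow> 1 \<le> k \<and> k < n \<and> (i + 2 \<le> k \<or> k + 2 \<le> i) | Pgen t \<Rightarrow> 2 \<le> i)"

lemma wreath_equiv_push:
  assumes "1 \<le> i" "i < n" "\<forall>g\<in>set w. far_letter n i g"
  shows "wreath_equiv T n (Rgen i # w) (w @ [Rgen i])"
  using assms(3)
proof (induct w)
  case (Cons g w)
  have swap: "wreath_equiv T n [Rgen i, g] [g, Rgen i]"
  proof (cases g)
    case (Rgen k)
    then show ?thesis
      using assms Cons.prems wreath_equiv_far[of i k n T] wr_sym[OF wreath_equiv_far[of k i n T]]
      by (auto simp: far_letter_def)
  next
    case (Pgen t)
    then show ?thesis
      using assms Cons.prems wr_sym[OF wr_far_pi[of i n T t]] by (auto simp: far_letter_def)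
  qed
  have "wreath_equiv T n (Rgen i # g # w) (g # Rgen i # w)"
    using wreath_equiv_append[OF swap wr_refl[of T n w]] by simp
  also have "wreath_equiv T n (g # Rgen i # w) (g # w @ [Rgen i])"
    using wreath_equiv_append[OF wr_refl[of T n "[g]"]] Cons by simp
  finally show ?case
    by simp
qed (simp add: wr_refl)

lemma wreath_equiv_Rgens_rev: "set w \<subseteq> {1..<n} \<Longrightarrow> wreath_equiv T n (map Rgen w @ map Rgen (rev w)) []"
proof (induct w)
  case (Cons i w)
  have "wreath_equiv T n ([Rgen i] @ (map Rgen w @ map Rgen (rev w)) @ [Rgen i]) ([Rgen i] @ [] @ [Rgen i])"
    by (rule wr_context) (use Cons in simp)
  also have "wreath_equiv T n ([Rgen i] @ [] @ [Rgen i]) []"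
    using Cons.prems wreath_equiv_square[of i n T] by simp
  finally show ?case
    by simp
qed (simp add: wr_refl)

text \<open>Hypotheses \<open>A\<close> and \<open>B\<close> say \<open>X = R\<^sub>k Y R\<^sub>k\<close>, so commutation is conjugated along.\<close>

lemma wreath_equiv_conj_commute:
  assumes k: "1 \<le> k" "k < n"
    and A: "wreath_equiv T n (Rgen k # YA) (XA @ [Rgen k])"
    and B: "wreath_equiv T n (Rgen k # YB) (XB @ [Rgen k])"
    and AB: "wreath_equiv T n (YA @ YB) (YB @ YA)"
  shows "wreath_equiv T n (XA @ XB) (XB @ XA)"
proof -
  have sq: "wreath_equiv T n [Rgen k, Rgen k] []"
    using k by (rule wreath_equiv_square)
  have conj: "wreath_equiv T n X (Rgen k # Y @ [Rgen k])"
    if "wreath_equiv T n (Rgen k # Y) (X @ [Rgen k])" for X Y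
  proof -
    have "wreath_equiv T n X (X @ [Rgen k, Rgen k])"
      using wreath_equiv_append[OF wr_refl wr_sym[OF sq], of X] by simp
    also have "wreath_equiv T n (X @ [Rgen k, Rgen k]) (Rgen k # Y @ [Rgen k])"
      using wreath_equiv_append[OF wr_sym[OF that] wr_refl[of T n "[Rgen k]"]] by simp
    finally show ?thesis .
  qed
  have "wreath_equiv T n (XA @ XB) ((Rgen k # YA @ [Rgen k]) @ (Rgen k # YB @ [Rgen k]))"
    using conj[OF A] conj[OF B] by (rule wreath_equiv_append)
  also have "wreath_equiv T n \<dots> ([Rgen k] @ YA @ [] @ YB @ [Rgen k])"
    using wr_context[OF sq, where a = "Rgen k # YA" and c = "YB @ [Rgen k]"] by simp
  also have "wreath_equiv T n \<dots> ([Rgen k] @ (YB @ YA) @ [Rgen k])"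
    using wr_context[OF AB, where a = "[Rgen k]" and c = "[Rgen k]"] by simp
  also have "wreath_equiv T n \<dots> ([Rgen k] @ YB @ [Rgen k, Rgen k] @ YA @ [Rgen k])"
    using wr_context[OF wr_sym[OF sq], where a = "Rgen k # YB" and c = "YA @ [Rgen k]"] by simp
  also have "wreath_equiv T n \<dots> (XB @ XA)"
    using wr_sym[OF wreath_equiv_append[OF conj[OF B] conj[OF A]]] by simp
  finally show ?thesis .
qed


definition pi_word :: "nat \<Rightarrow> 'a \<Rightarrow> 'a gen list" where
  "pi_word j t = map Rgen (rev [1..<j]) @ [Pgen t] @ map Rgen [1..<j]"

lemma pi_word_Suc: "1 \<le> j \<Longrightarrow> pi_word (Suc j) t = Rgen j # pi_word j t @ [Rgen j]"
  by (simp add: pi_word_def)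

lemma word_op_pi_word: "word_op R \<pi> n (pi_word i t) = piPos R n (\<pi> t) i"
  by (simp add: word_op_def pi_word_def piPos_def comp_def)

lemma pi_word_mult:
  assumes "t \<in> carrier T" "t' \<in> carrier T" "j \<le> n"
  shows "wreath_equiv T n (pi_word j t @ pi_word j t') (pi_word j (t \<otimes>\<^bsub>T\<^esub> t'))"
proof -
  let ?L = "map Rgen (rev [1..<j])" and ?L' = "map Rgen [1..<j]"
  have "wreath_equiv T n ((?L @ [Pgen t]) @ (?L' @ ?L) @ ([Pgen t'] @ ?L')) ((?L @ [Pgen t]) @ [] @ ([Pgen t'] @ ?L'))"
    using assms by (intro wr_context wreath_equiv_Rgens_rev) auto
  also have "wreath_equiv T n \<dots> (?L @ [Pgen (t \<otimes>\<^bsub>T\<^esub> t')] @ ?L')"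
    using wr_context[OF wr_pi_mult[OF assms(1,2)], where a = ?L and c = ?L'] by simp
  finally show ?thesis
    by (simp add: pi_word_def)
qed

lemma Rgen_pi_word_below:
  "j < i \<Longrightarrow> 1 \<le> j \<Longrightarrow> i < n \<Longrightarrow> wreath_equiv T n (Rgen i # pi_word j t) (pi_word j t @ [Rgen i])"
  by (intro wreath_equiv_push) (auto simp: pi_word_def far_letter_def)

lemma Rgen_pi_word_same:
  assumes "1 \<le> i" "i < n"
  shows "wreath_equiv T n (Rgen i # pi_word i t) (pi_word (Suc i) t @ [Rgen i])"
proof -
  have "wreath_equiv T n ((Rgen i # pi_word i t) @ []) ((Rgen i # pi_word i t) @ [Rgen i, Rgen i])"
    by (rule wreath_equiv_append[OF wr_refl wr_sym[OF wreath_equiv_square[OF assms]]])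
  then show ?thesis
    using assms by (simp add: pi_word_Suc)
qed

lemma Rgen_pi_word_next:
  assumes "1 \<le> i" "i < n"
  shows "wreath_equiv T n (Rgen i # pi_word (Suc i) t) (pi_word i t @ [Rgen i])"
  using assms wr_context[OF wreath_equiv_square[OF assms], where a = "[]" and c = "pi_word i t @ [Rgen i]"]
  by (simp add: pi_word_Suc)

lemma Rgen_pi_word_above:
  assumes "1 \<le> i" "i + 2 \<le> j" "j \<le> n"
  shows "wreath_equiv T n (Rgen i # pi_word j t) (pi_word j t @ [Rgen i])"
  using assms
proof (induct j)
  case (Suc j)
  show ?case
  proof (cases "i + 2 \<le> j")
    case True
    have j: "1 \<le> j"
      using True Suc.prems by simp
    have far: "wreath_equiv T n [Rgen i, Rgen j] [Rgen j, Rgen i]"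
      using True Suc.prems by (intro wreath_equiv_far) auto
    have "wreath_equiv T n (Rgen i # pi_word (Suc j) t) ([Rgen j] @ (Rgen i # pi_word j t) @ [Rgen j])"
      using wr_context[OF far, where a = "[]" and c = "pi_word j t @ [Rgen j]"] j by (simp add: pi_word_Suc)
    also have "wreath_equiv T n \<dots> ((Rgen j # pi_word j t) @ [Rgen i, Rgen j] @ [])"
      using wr_context[OF Suc.hyps, where a = "[Rgen j]" and c = "[Rgen j]"] True Suc.prems by simp
    also have "wreath_equiv T n \<dots> ((Rgen j # pi_word j t) @ [Rgen j, Rgen i] @ [])"
      by (rule wr_context[OF far])
    finally show ?thesis
      using j by (simp add: pi_word_Suc)
  next
    case False
    then have j: "j = Suc i"
      using Suc.prems by simp
    have word: "pi_word (Suc j) t = [Rgen (Suc i), Rgen i] @ pi_word i t @ [Rgen i, Rgen (Suc i)]"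
      using j Suc.prems by (simp add: pi_word_Suc)
    have braid: "wreath_equiv T n [Rgen i, Rgen (Suc i), Rgen i] [Rgen (Suc i), Rgen i, Rgen (Suc i)]"
      using Suc.prems j by (intro wreath_equiv_braid) auto
    have below: "wreath_equiv T n (Rgen (Suc i) # pi_word i t) (pi_word i t @ [Rgen (Suc i)])"
      using Suc.prems j by (intro Rgen_pi_word_below) auto
    have "wreath_equiv T n (Rgen i # pi_word (Suc j) t)
        ([Rgen (Suc i), Rgen i, Rgen (Suc i)] @ pi_word i t @ [Rgen i, Rgen (Suc i)])"
      using wr_context[OF braid, where a = "[]" and c = "pi_word i t @ [Rgen i, Rgen (Suc i)]"] word by simp
    also have "wreath_equiv T n \<dots> ([Rgen (Suc i), Rgen i] @ pi_word i t @ [Rgen (Suc i), Rgen i, Rgen (Suc i)])"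
      using wr_context[OF below, where a = "[Rgen (Suc i), Rgen i]" and c = "[Rgen i, Rgen (Suc i)]"] by simp
    also have "wreath_equiv T n \<dots> ([Rgen (Suc i), Rgen i] @ pi_word i t @ [Rgen i, Rgen (Suc i), Rgen i])"
      using wr_context[OF wr_sym[OF braid], where a = "[Rgen (Suc i), Rgen i] @ pi_word i t" and c = "[]"] by simp
    finally show ?thesis
      using word by simp
  qed
qed simp

lemma Rgen_pi_word:
  assumes "1 \<le> i" "i < n" "1 \<le> j" "j \<le> n"
  shows "wreath_equiv T n (Rgen i # pi_word j t) (pi_word (transpose i (Suc i) j) t @ [Rgen i])"
proof -
  consider "j < i" | "j = i" | "j = Suc i" | "i + 2 \<le> j"
    by linarith
  then show ?thesis
  proof cases
    case 1
    then show ?thesis using assms Rgen_pi_word_below[of j i n T t] by simp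
  next
    case 2
    then show ?thesis using assms Rgen_pi_word_same[of i n T t] by simp
  next
    case 3
    then show ?thesis using assms Rgen_pi_word_next[of i n T t] by simp
  next
    case 4
    then show ?thesis using assms Rgen_pi_word_above[of i j n T t] by simp
  qed
qed

text \<open>The extended reflection equation is the case \<open>i = 1\<close>; conjugation by \<open>R\<^sub>i\<^sub>+\<^sub>1\<close> and \<open>R\<^sub>i\<close>
  carries the pair \<open>(i, i + 1)\<close> to \<open>(i, i + 2)\<close> and then to \<open>(i + 1, i + 2)\<close>.\<close>

lemma pi_words_adjacent_commute:
  assumes "1 \<le> i" "Suc i \<le> n" "t \<in> carrier T" "t' \<in> carrier T"
  shows "wreath_equiv T n (pi_word i t @ pi_word (Suc i) t') (pi_word (Suc i) t' @ pi_word i t)"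
  using assms
proof (induct i arbitrary: t t')
  case (Suc i)
  show ?case
  proof (cases "i = 0")
    case True
    have "wreath_equiv T n [Rgen 1, Pgen t', Rgen 1, Pgen t] [Pgen t, Rgen 1, Pgen t', Rgen 1]"
      using Suc.prems True by (intro wr_reflection) auto
    then have "wreath_equiv T n [Pgen t, Rgen 1, Pgen t', Rgen 1] [Rgen 1, Pgen t', Rgen 1, Pgen t]"
      by (rule wr_sym)
    then show ?thesis
      using True by (simp add: pi_word_def)
  next
    case False
    then have i: "1 \<le> i"
      by simp
    have "wreath_equiv T n (pi_word i t @ pi_word (Suc (Suc i)) t') (pi_word (Suc (Suc i)) t' @ pi_word i t)"
    proof (rule wreath_equiv_conj_commute[of "Suc i" n])
      show "wreath_equiv T n (Rgen (Suc i) # pi_word i t) (pi_word i t @ [Rgen (Suc i)])"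
        using Suc.prems i by (intro Rgen_pi_word_below) auto
      show "wreath_equiv T n (Rgen (Suc i) # pi_word (Suc i) t') (pi_word (Suc (Suc i)) t' @ [Rgen (Suc i)])"
        using Suc.prems i by (intro Rgen_pi_word_same) auto
      show "wreath_equiv T n (pi_word i t @ pi_word (Suc i) t') (pi_word (Suc i) t' @ pi_word i t)"
        using Suc i by simp
    qed (use Suc.prems in auto)
    then show ?thesis
    proof (rule wreath_equiv_conj_commute[of i n, rotated 4])
      show "wreath_equiv T n (Rgen i # pi_word i t) (pi_word (Suc i) t @ [Rgen i])"
        using Suc.prems i by (intro Rgen_pi_word_same) auto
      show "wreath_equiv T n (Rgen i # pi_word (Suc (Suc i)) t') (pi_word (Suc (Suc i)) t' @ [Rgen i])"
        using Suc.prems i by (intro Rgen_pi_word_above) auto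
    qed (use Suc.prems i in auto)
  qed
qed simp

lemma pi_words_commute_less:
  assumes "1 \<le> i" "i < j" "j \<le> n" "t \<in> carrier T" "t' \<in> carrier T"
  shows "wreath_equiv T n (pi_word i t @ pi_word j t') (pi_word j t' @ pi_word i t)"
  using assms(2-5)
proof (induct j arbitrary: t')
  case (Suc j)
  show ?case
  proof (cases "j = i")
    case True
    then show ?thesis
      using pi_words_adjacent_commute assms(1) Suc.prems by simp
  next
    case False
    then have ij: "i < j"
      using Suc.prems by simp
    show ?thesis
    proof (rule wreath_equiv_conj_commute[of j n])
      show "wreath_equiv T n (Rgen j # pi_word i t) (pi_word i t @ [Rgen j])"
        using Suc.prems ij assms(1) by (intro Rgen_pi_word_below) auto
      show "wreath_equiv T n (Rgen j # pi_word j t') (pi_word (Suc j) t' @ [Rgen j])"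
        using Suc.prems ij assms(1) by (intro Rgen_pi_word_same) auto
      show "wreath_equiv T n (pi_word i t @ pi_word j t') (pi_word j t' @ pi_word i t)"
        using Suc ij by simp
    qed (use Suc.prems ij assms(1) in auto)
  qed
qed simp

lemma pi_words_commute:
  assumes "1 \<le> i" "1 \<le> j" "i \<noteq> j" "i \<le> n" "j \<le> n" "t \<in> carrier T" "t' \<in> carrier T"
  shows "wreath_equiv T n (pi_word i t @ pi_word j t') (pi_word j t' @ pi_word i t)"
proof (cases "i < j")
  case True
  show ?thesis
    by (rule pi_words_commute_less) (use assms True in auto)
next
  case False
  show ?thesis
    by (rule wr_sym, rule pi_words_commute_less) (use assms False in auto)
qed


definition diag_word :: "nat list \<Rightarrow> (nat \<Rightarrow> 'a) \<Rightarrow> 'a gen list" where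
  "diag_word l d = concat (map (\<lambda>j. pi_word j (d j)) l)"

lemma diag_word_Nil [simp]: "diag_word [] d = []"
  by (simp add: diag_word_def)

lemma diag_word_Cons [simp]: "diag_word (j # l) d = pi_word j (d j) @ diag_word l d"
  by (simp add: diag_word_def)

lemma diag_word_append: "diag_word (l @ l') d = diag_word l d @ diag_word l' d"
  by (simp add: diag_word_def)

lemma rhoD_eq_word_op: "rhoD R \<pi> n d = word_op R \<pi> n (diag_word [1..<Suc n] d)"
  unfolding rhoD_def diag_word_def word_op_pi_word[symmetric] by (rule word_op_concat)

lemma pi_word_diag_word_commute:
  assumes "1 \<le> a" "a \<le> n" "a \<notin> set l" "set l \<subseteq> {1..n}" "t \<in> carrier T" "\<forall>j\<in>set l. d j \<in> carrier T"
  shows "wreath_equiv T n (pi_word a t @ diag_word l d) (diag_word l d @ pi_word a t)"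
  using assms(3-6)
proof (induct l)
  case (Cons j l)
  have "wreath_equiv T n ((pi_word a t @ pi_word j (d j)) @ diag_word l d)
      ((pi_word j (d j) @ pi_word a t) @ diag_word l d)"
    by (rule wreath_equiv_append[OF pi_words_commute wr_refl]) (use Cons.prems assms in auto)
  also have "\<dots> = pi_word j (d j) @ pi_word a t @ diag_word l d"
    by simp
  also have "wreath_equiv T n (pi_word j (d j) @ pi_word a t @ diag_word l d)
      (pi_word j (d j) @ diag_word l d @ pi_word a t)"
    by (rule wreath_equiv_append[OF wr_refl]) (use Cons in auto)
  finally show ?case
    by simp
qed (simp add: wr_refl)

lemma diag_word_mult:
  assumes "distinct l" "set l \<subseteq> {1..n}" "\<forall>j\<in>set l. d j \<in> carrier T \<and> e j \<in> carrier T"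
  shows "wreath_equiv T n (diag_word l d @ diag_word l e) (diag_word l (\<lambda>j. d j \<otimes>\<^bsub>T\<^esub> e j))"
  using assms
proof (induct l)
  case (Cons j l)
  have "wreath_equiv T n (pi_word j (d j) @ (diag_word l d @ pi_word j (e j)) @ diag_word l e)
      (pi_word j (d j) @ (pi_word j (e j) @ diag_word l d) @ diag_word l e)"
    by (rule wr_context, rule wr_sym, rule pi_word_diag_word_commute) (use Cons.prems in auto)
  also have "\<dots> = (pi_word j (d j) @ pi_word j (e j)) @ diag_word l d @ diag_word l e"
    by simp
  also have "wreath_equiv T n \<dots> (pi_word j (d j \<otimes>\<^bsub>T\<^esub> e j) @ diag_word l d @ diag_word l e)"
    by (rule wreath_equiv_append[OF pi_word_mult wr_refl]) (use Cons.prems in auto)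
  also have "wreath_equiv T n (pi_word j (d j \<otimes>\<^bsub>T\<^esub> e j) @ diag_word l d @ diag_word l e)
      (pi_word j (d j \<otimes>\<^bsub>T\<^esub> e j) @ diag_word l (\<lambda>j. d j \<otimes>\<^bsub>T\<^esub> e j))"
    by (rule wreath_equiv_append[OF wr_refl]) (use Cons in auto)
  finally show ?case
    by simp
qed (simp add: wr_refl)

lemma Rgen_diag_word_push:
  assumes "1 \<le> i" "i < n" "set l \<subseteq> {1..n}"
  shows "wreath_equiv T n (Rgen i # diag_word l d)
           (concat (map (\<lambda>j. pi_word (transpose i (Suc i) j) (d j)) l) @ [Rgen i])"
  using assms(3)
proof (induct l)
  case (Cons j l)
  let ?s = "transpose i (Suc i)"
  have "wreath_equiv T n ((Rgen i # pi_word j (d j)) @ diag_word l d) ((pi_word (?s j) (d j) @ [Rgen i]) @ diag_word l d)"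
    by (rule wreath_equiv_append[OF Rgen_pi_word wr_refl]) (use Cons.prems assms in auto)
  also have "\<dots> = pi_word (?s j) (d j) @ Rgen i # diag_word l d"
    by simp
  also have "wreath_equiv T n \<dots>
      (pi_word (?s j) (d j) @ concat (map (\<lambda>j. pi_word (?s j) (d j)) l) @ [Rgen i])"
    by (rule wreath_equiv_append[OF wr_refl]) (use Cons in auto)
  finally show ?case
    by simp
qed (simp add: wr_refl)

lemma diag_word_transpose:
  assumes "1 \<le> i" "i < n" "\<forall>j. d j \<in> carrier T"
  shows "wreath_equiv T n (concat (map (\<lambda>j. pi_word (transpose i (Suc i) j) (d j)) [1..<Suc n]))
           (diag_word [1..<Suc n] (d \<circ> transpose i (Suc i)))"
proof -
  let ?s = "transpose i (Suc i)"
  let ?D = "\<lambda>l. concat (map (\<lambda>j. pi_word (?s j) (d j)) l)"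
  have split: "[1..<Suc n] = [1..<i] @ [i, Suc i] @ [Suc (Suc i)..<Suc n]"
    using assms upt_add_eq_append[of 1 i "Suc n - i"] by (simp add: upt_conv_Cons)
  have "?D l = diag_word l (d \<circ> ?s)" if "i \<notin> set l" "Suc i \<notin> set l" for l
    unfolding diag_word_def using that
    by (intro arg_cong[where f = concat] map_cong) (auto simp: transpose_def)
  then have outer: "?D [1..<i] = diag_word [1..<i] (d \<circ> ?s)"
      "?D [Suc (Suc i)..<Suc n] = diag_word [Suc (Suc i)..<Suc n] (d \<circ> ?s)"
    by auto
  have "wreath_equiv T n (pi_word (Suc i) (d i) @ pi_word i (d (Suc i)))
      (pi_word i (d (Suc i)) @ pi_word (Suc i) (d i))"
    using assms by (intro pi_words_commute) auto
  then have "wreath_equiv T n (?D [1..<i] @ (pi_word (Suc i) (d i) @ pi_word i (d (Suc i))) @ ?D [Suc (Suc i)..<Suc n])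
      (?D [1..<i] @ (pi_word i (d (Suc i)) @ pi_word (Suc i) (d i)) @ ?D [Suc (Suc i)..<Suc n])"
    by (rule wr_context)
  then show ?thesis
    unfolding split using outer by (simp add: diag_word_append del: upt_Suc)
qed

lemma Rgen_diag_word:
  assumes "1 \<le> i" "i < n" "\<forall>j. d j \<in> carrier T"
  shows "wreath_equiv T n (Rgen i # diag_word [1..<Suc n] d)
           (diag_word [1..<Suc n] (d \<circ> transpose i (Suc i)) @ [Rgen i])"
proof -
  have "wreath_equiv T n (Rgen i # diag_word [1..<Suc n] d)
      (concat (map (\<lambda>j. pi_word (transpose i (Suc i) j) (d j)) [1..<Suc n]) @ [Rgen i])"
    using assms by (intro Rgen_diag_word_push) auto
  also have "wreath_equiv T n \<dots> (diag_word [1..<Suc n] (d \<circ> transpose i (Suc i)) @ [Rgen i])"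
    by (rule wreath_equiv_append[OF diag_word_transpose[OF assms] wr_refl])
  finally show ?thesis .
qed

lemma Rgens_diag_word:
  assumes "set w \<subseteq> {1..<n}" "\<forall>j. d j \<in> carrier T"
  shows "wreath_equiv T n (map Rgen w @ diag_word [1..<Suc n] d)
           (diag_word [1..<Suc n] (d \<circ> sword (rev w)) @ map Rgen w)"
  using assms
proof (induct w arbitrary: d)
  case (Cons i w)
  let ?D = "diag_word [1..<Suc n]"
  have "wreath_equiv T n ([Rgen i] @ map Rgen w @ ?D d) ([Rgen i] @ ?D (d \<circ> sword (rev w)) @ map Rgen w)"
    by (rule wreath_equiv_append[OF wr_refl Cons.hyps]) (use Cons.prems in auto)
  also have "\<dots> = (Rgen i # ?D (d \<circ> sword (rev w))) @ map Rgen w"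
    by simp
  also have "wreath_equiv T n ((Rgen i # ?D (d \<circ> sword (rev w))) @ map Rgen w)
      ((?D (d \<circ> sword (rev w) \<circ> transpose i (Suc i)) @ [Rgen i]) @ map Rgen w)"
    by (rule wreath_equiv_append[OF Rgen_diag_word wr_refl]) (use Cons.prems in auto)
  finally have "wreath_equiv T n (Rgen i # map Rgen w @ ?D d)
      (?D (d \<circ> sword (rev w) \<circ> transpose i (Suc i)) @ Rgen i # map Rgen w)"
    by simp
  moreover have "d \<circ> sword (rev (i # w)) = d \<circ> sword (rev w) \<circ> transpose i (Suc i)"
    by (simp add: sword_append fun_eq_iff)
  ultimately show ?case
    by (simp only: list.map append_Cons)
qed (simp add: wr_refl)



definition normal_word :: "nat \<Rightarrow> (nat \<Rightarrow> 'a) \<times> (nat \<Rightarrow> nat) \<Rightarrow> 'a gen list" where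
  "normal_word n g = diag_word [1..<Suc n] (fst g) @ map Rgen (canonical_word n (snd g))"

lemma rho_eq_word_op_normal_word:
  assumes "involutive_Rmatrix R" "snd g permutes {1..n}"
  shows "(rho R \<pi> n g :: ('w::finite, 'v::finite) lop) = word_op R \<pi> n (normal_word n g)"
  using assms
  by (simp add: rho_def normal_word_def rhoD_eq_word_op rhoS_eq_canonical_word word_op_append word_op_Rgens)

lemma wreath_equiv_normal_word_mult:
  assumes g: "g \<in> wr_carrier T n" and h: "h \<in> wr_carrier T n"
  shows "wreath_equiv T n (normal_word n g @ normal_word n h) (normal_word n (wr_mult T g h))"
proof -
  obtain d \<sigma> e \<tau> where gh: "g = (d, \<sigma>)" "h = (e, \<tau>)"
    by fastforce
  have d: "\<forall>i. d i \<in> carrier T" and \<sigma>: "\<sigma> permutes {1..n}"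
    and e: "\<forall>i. e i \<in> carrier T" and \<tau>: "\<tau> permutes {1..n}"
    using g h gh by (auto simp: wr_carrier_def)
  define c where "c = canonical_word n \<sigma>"
  define c' where "c' = canonical_word n \<tau>"
  have c: "set c \<subseteq> {1..<n}" "sword c = \<sigma>" and c': "set c' \<subseteq> {1..<n}" "sword c' = \<tau>"
    using canonical_word_represents[OF \<sigma>] canonical_word_represents[OF \<tau>] by (auto simp: c_def c'_def)
  let ?D = "diag_word [1..<Suc n]"
  let ?de = "\<lambda>i. d i \<otimes>\<^bsub>T\<^esub> (e \<circ> sword (rev c)) i"
  have mult: "wr_mult T (d, \<sigma>) (e, \<tau>) = (?de, \<sigma> \<circ> \<tau>)"
    using inv_sword[of c] c(2) by (simp add: wr_mult_def)
  have "wreath_equiv T n (?D d @ (map Rgen c @ ?D e) @ map Rgen c')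
      (?D d @ (?D (e \<circ> sword (rev c)) @ map Rgen c) @ map Rgen c')"
    by (rule wr_context[OF Rgens_diag_word[OF c(1) e]])
  also have "\<dots> = (?D d @ ?D (e \<circ> sword (rev c))) @ map Rgen (c @ c')"
    by simp
  also have "wreath_equiv T n \<dots> (?D ?de @ map Rgen (c @ c'))"
    by (rule wreath_equiv_append[OF diag_word_mult wr_refl]) (use d e in auto)
  also have "wreath_equiv T n \<dots> (?D ?de @ map Rgen (canonical_word n (\<sigma> \<circ> \<tau>)))"
    using coxeter_equiv_canonical_word[of "c @ c'" n] c c'
    by (intro wreath_equiv_append[OF wr_refl wr_coxeter]) (simp add: sword_append)
  finally show ?thesis
    unfolding normal_word_def mult gh c_def c'_def by simp
qed

section \<open>The Yang-Baxter couple criterion\<close>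

locale rep_with_Rmatrix =
  fixes T :: "('a, 'b) monoid_scheme"
    and \<pi> :: "'a \<Rightarrow> ('w::finite \<times> 'v::finite \<Rightarrow> 'w \<times> 'v \<Rightarrow> complex)"
    and R :: "'v \<times> 'v \<Rightarrow> 'v \<times> 'v \<Rightarrow> complex"
  assumes monoid: "monoid T"
    and R_involutive: "involutive_Rmatrix R"
    and \<pi>_one: "\<pi> \<one>\<^bsub>T\<^esub> = mid"
    and \<pi>_mult: "s \<in> carrier T \<Longrightarrow> t \<in> carrier T \<Longrightarrow> \<pi> (s \<otimes>\<^bsub>T\<^esub> t) = mm (\<pi> s) (\<pi> t)"
begin

lemma word_op_wreath_equiv:
  assumes ext: "ext_reflection T \<pi> R" and n: "1 \<le> n" and uv: "wreath_equiv T n u v"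
  shows "word_op R \<pi> n u = word_op R \<pi> n v"
  using uv
proof (induct rule: wreath_equiv.induct)
  case (wr_context u v a c)
  then show ?case
    by (simp add: word_op_append)
next
  case (wr_coxeter u v)
  then show ?case
    by (simp add: word_op_Rgens opprod_Rop_coxeter_equiv[OF R_involutive])
next
  case (wr_far_pi j t)
  then show ?case
    using opprod_Piop_Rop_commute[of j n "\<pi> t" R] by (simp add: word_op_def)
next
  case (wr_pi_mult t t')
  then show ?case
    using opprod_Piop_mult[OF n, of "\<pi> t" "\<pi> t'"] by (simp add: word_op_def \<pi>_mult)
next
  case wr_pi_one
  show ?case
    using n by (simp add: word_op_def \<pi>_one Piop_mid opmul_opid_left)
next
  case (wr_reflection t t')
  then have "(opprod 2 [Rop R 2 1, Piop 2 (\<pi> t), Rop R 2 1, Piop 2 (\<pi> t')] :: ('w, 'v) lop)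
      = opprod 2 [Piop 2 (\<pi> t'), Rop R 2 1, Piop 2 (\<pi> t), Rop R 2 1]"
    using ext unfolding ext_reflection_def by blast
  from opprod_ext_reflection_lift[OF wr_reflection(1) this] show ?case
    by (simp add: word_op_def)
qed simp_all

lemma YB_couple_if_ext_reflection:
  assumes "ext_reflection T \<pi> R"
  shows "YB_couple T \<pi> R"
  unfolding YB_couple_def
proof (intro allI impI ballI)
  fix n :: nat and g h
  assume n: "1 \<le> n" and g: "g \<in> wr_carrier T n" and h: "h \<in> wr_carrier T n"
  have perm: "snd g permutes {1..n}" "snd h permutes {1..n}" "snd (wr_mult T g h) permutes {1..n}"
    using g h by (auto simp: wr_carrier_def wr_mult_def intro: permutes_compose)
  have "rho R \<pi> n (wr_mult T g h) = word_op R \<pi> n (normal_word n (wr_mult T g h))"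
    by (rule rho_eq_word_op_normal_word[OF R_involutive perm(3)])
  also have "\<dots> = word_op R \<pi> n (normal_word n g @ normal_word n h)"
    using word_op_wreath_equiv[OF assms n wreath_equiv_normal_word_mult[OF g h]] by simp
  also have "\<dots> = opmul n (rho R \<pi> n g) (rho R \<pi> n h)"
    by (simp add: word_op_append rho_eq_word_op_normal_word[OF R_involutive perm(1)]
        rho_eq_word_op_normal_word[OF R_involutive perm(2)])
  finally show "rho R \<pi> n (wr_mult T g h) = opmul n (rho R \<pi> n g) (rho R \<pi> n h)" .
qed

text \<open>Multiply \<open>t\<close> placed at position 2 by \<open>t'\<close> placed at position 1 in \<open>G\<^sub>2\<close>.\<close>

lemma ext_reflection_if_YB_couple:
  assumes "YB_couple T \<pi> R"
  shows "ext_reflection T \<pi> R"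
  unfolding ext_reflection_def
proof (intro ballI)
  fix t t' assume t: "t \<in> carrier T" and t': "t' \<in> carrier T"
  interpret monoid T by (rule monoid)
  let ?e = "\<lambda>_ :: nat. \<one>\<^bsub>T\<^esub>"
  let ?W = "word_op R \<pi> 2"
  have word: "rho R \<pi> 2 (f, id) = ?W [Pgen (f 1), Rgen 1, Pgen (f 2), Rgen 1]" for f
    using rho_eq_word_op_normal_word[OF R_involutive, of "(f, id)" 2]
    by (simp add: normal_word_def canonical_word_id pi_word_def numeral_2_eq_2)
  have "rho R \<pi> 2 (wr_mult T (?e(2 := t), id) (?e(1 := t'), id))
      = opmul 2 (rho R \<pi> 2 (?e(2 := t), id)) (rho R \<pi> 2 (?e(1 := t'), id))"
    using assms t t' unfolding YB_couple_def by (auto simp: wr_carrier_def)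
  moreover have "wr_mult T (?e(2 := t), id) (?e(1 := t'), id) = (?e(1 := t', 2 := t), id)"
    using t t' by (auto simp: wr_mult_def inv_id)
  ultimately have "?W [Pgen t', Rgen 1, Pgen t, Rgen 1]
      = opmul 2 (?W [Pgen \<one>\<^bsub>T\<^esub>, Rgen 1, Pgen t, Rgen 1]) (?W [Pgen t', Rgen 1, Pgen \<one>\<^bsub>T\<^esub>, Rgen 1])"
    by (simp add: word)
  also have "?W [Pgen \<one>\<^bsub>T\<^esub>, Rgen 1, Pgen t, Rgen 1] = ?W [Rgen 1, Pgen t, Rgen 1]"
    by (simp add: word_op_def \<pi>_one Piop_mid opmul_opid_left)
  also have "?W [Pgen t', Rgen 1, Pgen \<one>\<^bsub>T\<^esub>, Rgen 1] = ?W [Pgen t']"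
    using opprod_Rop_square[of R 1 2, where 'w = 'w] R_involutive
    by (simp add: word_op_def \<pi>_one Piop_mid opmul_opid_left involutive_Rmatrix_def)
  finally have "?W ([Rgen 1, Pgen t, Rgen 1] @ [Pgen t']) = ?W [Pgen t', Rgen 1, Pgen t, Rgen 1]"
    by (simp only: word_op_append)
  then show "(opprod 2 [Rop R 2 1, Piop 2 (\<pi> t), Rop R 2 1, Piop 2 (\<pi> t')] :: ('w, 'v) lop)
      = opprod 2 [Piop 2 (\<pi> t'), Rop R 2 1, Piop 2 (\<pi> t), Rop R 2 1]"
    by (simp add: word_op_def)
qed

end

theorem mainTheorem1:
  fixes T :: "('a, 'b) monoid_scheme"
    and \<pi> :: "'a \<Rightarrow> ('w::finite \<times> 'v::finite \<Rightarrow> 'w \<times> 'v \<Rightarrow> complex)"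
    and R :: "'v \<times> 'v \<Rightarrow> 'v \<times> 'v \<Rightarrow> complex"
  assumes "group T" and "finite (carrier T)"
    and "unitary_rep T \<pi>"
    and "involutive_Rmatrix R"
  shows "YB_couple T \<pi> R \<longleftrightarrow> YBE R \<and> ext_reflection T \<pi> R"
proof -
  interpret rep_with_Rmatrix T \<pi> R
    using group.is_monoid[OF assms(1)] assms(3,4) by (intro rep_with_Rmatrix.intro) (auto simp: unitary_rep_def)
  have "YBE R"
    using assms(4) by (simp add: involutive_Rmatrix_def)
  then show ?thesis
    using YB_couple_if_ext_reflection ext_reflection_if_YB_couple by blast
qed

end
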